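(* Let $\mathcal{D}=(\mathcal{P},\mathcal{B},\mathcal{I})$ be a quasi-symmetric $(v,b,r,k,\lambda_1,0)$ SPBIBD of type $(k-1,t)$ with intersection numbers $x=0$ and $y>1$, and let $\Gamma$ be its incidence graph. Then $\Gamma$ is $2$-$\mathcal{P}$-homogeneous if and only if $$k=\frac{(y-1)(r-\lambda_1)(t-1)}{\lambda_1(t-y)}+2\quad\text{and}\quad t=\frac{(k-1)\left[r(y-1)-\lambda_1(k-y-1)\right]}{\lambda_1(y-1)}.$$
   Context: A design $\mathcal{D}=(\mathcal{P},\mathcal{B},\mathcal{I})$ is an incidence structure with $|\mathcal{P}|=v$, $|\mathcal{B}|=b$, every block incident with exactly $k$ points and every point with exactly $r$ blocks; standing assumptions: $v>k$ and $r<b$. $(p,B)$ is a flag if $p\in B$, a non-flag otherwise. $\mathcal{D}$ is a $(v,b,r,k,\lambda_1,\lambda_2)$ SPBIBD of type $(s,t)$ if (i) any two distinct points are together in exactly $\lambda_1$ or exactly $\lambda_2$ blocks; (ii) for every flag $(p,B)$, the number of points of $B$ other than $p$ lying with $p$ in exactly $\lambda_1$ blocks is $s$; (iii) for every non-flag $(p,B)$, the number of points of $B$ lying with $p$ in exactly $\lambda_1$ blocks is $t$. Quasi-symmetric with intersection numbers $x<y$: any two distinct blocks share exactly $x$ or $y$ points, both values occurring. The incidence graph is the bipartite graph on $\mathcal{P}\cup\mathcal{B}$ with $p\sim B$ iff $p\in B$. $\Gamma_i(u)$ is the set of vertices at distance $i$ from $u$, $\Gamma(u)=\Gamma_1(u)$.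 For a $(Y,Y')$-bipartite graph in which every vertex of $Y$ has eccentricity $D\ge3$: it is $2$-$Y$-homogeneous if for each $1\le i\le D-1$ the number $|\Gamma(x)\cap\Gamma(y)\cap\Gamma_{i-1}(z)|$ is the same for all $x\in Y$, $y\in\Gamma_2(x)$, $z\in\Gamma_i(x)\cap\Gamma_i(y)$. *)

theory Defs
  imports Complex_Main
begin

text \<open>Points P :: 'a set, blocks Bs :: 'b set (abstract block labels, so repeated
  blocks are allowed), incidence I p B.\<close>

definition lam :: "'a set \<Rightarrow> 'b set \<Rightarrow> ('a \<Rightarrow> 'b \<Rightarrow> bool) \<Rightarrow> 'a \<Rightarrow> 'a \<Rightarrow> nat" where
  "lam P Bs I p q = card {B \<in> Bs. I p B \<and> I q B}"

definition design ::
  "'a set \<Rightarrow> 'b set \<Rightarrow> ('a \<Rightarrow> 'b \<Rightarrow> bool) \<Rightarrow> nat \<Rightarrow> nat \<Rightarrow> nat \<Rightarrow> nat \<Rightarrow> bool" where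
  "design P Bs I v b r k \<longleftrightarrow>
     finite P \<and> finite Bs \<and> card P = v \<and> card Bs = b \<and>
     (\<forall>B\<in>Bs. card {p \<in> P. I p B} = k) \<and>
     (\<forall>p\<in>P. card {B \<in> Bs. I p B} = r) \<and>
     v > k \<and> r < b"

definition spbibd ::
  "'a set \<Rightarrow> 'b set \<Rightarrow> ('a \<Rightarrow> 'b \<Rightarrow> bool) \<Rightarrow> nat \<Rightarrow> nat \<Rightarrow> nat \<Rightarrow> nat \<Rightarrow> nat \<Rightarrow> nat
     \<Rightarrow> nat \<Rightarrow> nat \<Rightarrow> bool" where
  "spbibd P Bs I v b r k l1 l2 s t \<longleftrightarrow>
     design P Bs I v b r k \<and>
     (\<forall>p\<in>P. \<forall>q\<in>P. p \<noteq> q \<longrightarrow> lam P Bs I p q = l1 \<or> lam P Bs I p q = l2) \<and>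
     (\<forall>p\<in>P. \<forall>B\<in>Bs. I p B \<longrightarrow>
        card {q \<in> P. q \<noteq> p \<and> I q B \<and> lam P Bs I p q = l1} = s) \<and>
     (\<forall>p\<in>P. \<forall>B\<in>Bs. \<not> I p B \<longrightarrow>
        card {q \<in> P. I q B \<and> lam P Bs I p q = l1} = t)"

definition quasi_symmetric ::
  "'a set \<Rightarrow> 'b set \<Rightarrow> ('a \<Rightarrow> 'b \<Rightarrow> bool) \<Rightarrow> nat \<Rightarrow> nat \<Rightarrow> bool" where
  "quasi_symmetric P Bs I x y \<longleftrightarrow>
     x < y \<and>
     (\<forall>B\<in>Bs. \<forall>C\<in>Bs. B \<noteq> C \<longrightarrow>
        card {p \<in> P. I p B \<and> I p C} = x \<or> card {p \<in> P. I p B \<and> I p C} = y) \<and>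
     (\<exists>B\<in>Bs. \<exists>C\<in>Bs. B \<noteq> C \<and> card {p \<in> P. I p B \<and> I p C} = x) \<and>
     (\<exists>B\<in>Bs. \<exists>C\<in>Bs. B \<noteq> C \<and> card {p \<in> P. I p B \<and> I p C} = y)"

definition at_dist :: "('v \<times> 'v) set \<Rightarrow> 'v \<Rightarrow> 'v \<Rightarrow> nat \<Rightarrow> bool" where
  "at_dist E u w i \<longleftrightarrow> (u, w) \<in> E ^^ i \<and> (\<forall>j<i. (u, w) \<notin> E ^^ j)"

definition Gamma :: "('v \<times> 'v) set \<Rightarrow> nat \<Rightarrow> 'v \<Rightarrow> 'v set" where
  "Gamma E i u = {w. at_dist E u w i}"

definition has_ecc :: "('v \<times> 'v) set \<Rightarrow> 'v set \<Rightarrow> 'v \<Rightarrow> nat \<Rightarrow> bool" where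
  "has_ecc E V x D \<longleftrightarrow> (\<forall>w\<in>V. \<exists>i\<le>D. at_dist E x w i) \<and> (\<exists>w\<in>V. at_dist E x w D)"

definition two_Y_homogeneous :: "('v \<times> 'v) set \<Rightarrow> 'v set \<Rightarrow> 'v set \<Rightarrow> bool" where
  "two_Y_homogeneous E V Y \<longleftrightarrow>
     (\<exists>D\<ge>3. (\<forall>x\<in>Y. has_ecc E V x D) \<and>
       (\<forall>i\<in>{1..D-1}. \<exists>c. \<forall>x\<in>Y. \<forall>y\<in>Gamma E 2 x.
          \<forall>z\<in>Gamma E i x \<inter> Gamma E i y.
            card (Gamma E 1 x \<inter> Gamma E 1 y \<inter> Gamma E (i - 1) z) = c))"

definition inc_vertices :: "'a set \<Rightarrow> 'b set \<Rightarrow> ('a + 'b) set" where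
  "inc_vertices P Bs = Inl ` P \<union> Inr ` Bs"

definition inc_edges :: "'a set \<Rightarrow> 'b set \<Rightarrow> ('a \<Rightarrow> 'b \<Rightarrow> bool) \<Rightarrow> (('a + 'b) \<times> ('a + 'b)) set" where
  "inc_edges P Bs I =
     {(Inl p, Inr B) | p B. p \<in> P \<and> B \<in> Bs \<and> I p B} \<union>
     {(Inr B, Inl p) | p B. p \<in> P \<and> B \<in> Bs \<and> I p B}"

end

theory Submission
  imports Defs
begin

(* For t > 0 the vertices at distance 1, 2, 3 and 4 from a point x of the incidence graph are
   the blocks through x, the points collinear with x, the blocks missing x and the points not
   collinear with x, the last layer being empty exactly when t = k; for t = 0 the blocks missing
   x are unreachable. So 2-P-homogeneity amounts to two conditions on collinear points x, w:
   the number of blocks through x, w and z is the same for all points z collinear with both,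
   and, if t < k, the number of blocks through x and w that meet z is the same for all blocks z
   missing x and w.
   Double counting expresses the first and second moments of these numbers through the
   parameters, so each condition is the equality case of the Cauchy-Schwarz inequality, a
   polynomial equation in the parameters. Together with (r - 1)(y - 1) = (k - 1)(lambda1 - 1)
   and lambda1 t (b - r) = r (k - 1)(r - lambda1), the first equation is equivalent to the
   first formula; given it, the second formula holds automatically when t = k and is
   equivalent to the second equation when t < k. *)

lemma sum_card_mult_card_filter:
  assumes "finite A" "finite B" "finite C"
  shows "(\<Sum>c\<in>C. card {a\<in>A. R a c} * card {b\<in>B. R b c})
       = (\<Sum>a\<in>A. \<Sum>b\<in>B. card {c\<in>C. R a c \<and> R b c})"
proof -
  have indicator_mult: "(if Q1 then 1 else 0::nat) * (if Q2 then 1 else 0) = (if Q1 \<and> Q2 then 1 else 0)"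
    for Q1 Q2 by simp
  have "(\<Sum>c\<in>C. card {a\<in>A. R a c} * card {b\<in>B. R b c})
      = (\<Sum>c\<in>C. \<Sum>a\<in>A. \<Sum>b\<in>B. if R a c \<and> R b c then 1 else 0)"
    using assms by (simp only: card_eq_sum sum.inter_filter sum_product indicator_mult)
  also have "\<dots> = (\<Sum>a\<in>A. \<Sum>c\<in>C. \<Sum>b\<in>B. if R a c \<and> R b c then 1 else 0)"
    by (rule sum.swap)
  also have "\<dots> = (\<Sum>a\<in>A. \<Sum>b\<in>B. \<Sum>c\<in>C. if R a c \<and> R b c then 1 else 0)"
    by (intro sum.cong refl sum.swap)
  also have "\<dots> = (\<Sum>a\<in>A. \<Sum>b\<in>B. card {c\<in>C. R a c \<and> R b c})"
    using assms by (simp only: card_eq_sum sum.inter_filter)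
  finally show ?thesis .
qed

lemma sum_sum_diagonal_off_diagonal:
  fixes g :: "'x \<Rightarrow> 'x \<Rightarrow> 'a::comm_semiring_1"
  assumes "finite L"
    and "\<And>B. B \<in> L \<Longrightarrow> g B B = \<alpha>"
    and "\<And>B C. B \<in> L \<Longrightarrow> C \<in> L \<Longrightarrow> B \<noteq> C \<Longrightarrow> g B C = \<beta>"
  shows "(\<Sum>B\<in>L. \<Sum>C\<in>L. g B C) = of_nat (card L) * (\<alpha> + of_nat (card L - 1) * \<beta>)"
proof -
  have "(\<Sum>C\<in>L. g B C) = g B B + (\<Sum>C\<in>L - {B}. g B C)" if "B \<in> L" for B
    using assms(1) that by (rule sum.remove)
  moreover have "(\<Sum>C\<in>L - {B}. g B C) = of_nat (card L - 1) * \<beta>" if "B \<in> L" for B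
  proof -
    have "(\<Sum>C\<in>L - {B}. g B C) = (\<Sum>C\<in>L - {B}. \<beta>)"
      using assms(3) that by (intro sum.cong) auto
    then show ?thesis
      using assms(1) that by (simp add: card_Diff_singleton)
  qed
  ultimately have "(\<Sum>C\<in>L. g B C) = \<alpha> + of_nat (card L - 1) * \<beta>" if "B \<in> L" for B
    using assms(2) that by simp
  then show ?thesis by (simp add: mult.commute)
qed

lemma constant_on_iff_card_mult_sum_squares:
  fixes f :: "'x \<Rightarrow> nat"
  assumes "finite S"
  shows "(\<exists>c. \<forall>z\<in>S. f z = c) \<longleftrightarrow>
    real (card S) * (\<Sum>z\<in>S. real (f z)^2) = (\<Sum>z\<in>S. real (f z))^2"
proof
  assume "\<exists>c. \<forall>z\<in>S. f z = c"
  then show "real (card S) * (\<Sum>z\<in>S. real (f z)^2) = (\<Sum>z\<in>S. real (f z))^2"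
    by (auto simp: power2_eq_square)
next
  define g where "g z = real (f z)" for z
  assume "real (card S) * (\<Sum>z\<in>S. real (f z)^2) = (\<Sum>z\<in>S. real (f z))^2"
  then have eq: "real (card S) * (\<Sum>z\<in>S. (g z)^2) = (\<Sum>z\<in>S. g z)^2"
    by (simp add: g_def)
  have "(\<Sum>a\<in>S. \<Sum>b\<in>S. (g a - g b)^2) = (\<Sum>a\<in>S. \<Sum>b\<in>S. (g a)^2 + (g b)^2 - 2 * g a * g b)"
    by (simp add: power2_diff)
  also have "\<dots> = 2 * (real (card S) * (\<Sum>z\<in>S. (g z)^2)) - 2 * (\<Sum>z\<in>S. g z)^2"
    by (simp add: sum.distrib sum_subtractf sum_distrib_left sum_distrib_right
        power2_eq_square mult.assoc mult.commute mult.left_commute)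
  finally have "(\<Sum>a\<in>S. \<Sum>b\<in>S. (g a - g b)^2) = 0"
    using eq by simp
  then have "(g a - g b)^2 = 0" if "a \<in> S" "b \<in> S" for a b
  proof -
    have "(\<Sum>b\<in>S. (g a - g b)^2) = 0"
      using sum_nonneg_0[OF assms _ \<open>_ = 0\<close> that(1)] by (simp add: sum_nonneg)
    then show ?thesis
      using sum_nonneg_0[OF assms _ _ that(2), of "\<lambda>b. (g a - g b)^2"] by simp
  qed
  then show "\<exists>c. \<forall>z\<in>S. f z = c"
    by (metis g_def of_nat_eq_iff power_eq_0_iff right_minus_eq zero_neq_numeral)
qed

lemma constant_on_family:
  fixes f :: "'i \<Rightarrow> 'x \<Rightarrow> nat"
  assumes "\<And>i. i \<in> J \<Longrightarrow> \<exists>c. \<forall>z\<in>S i. f i z = c"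
    and "\<And>i. i \<in> J \<Longrightarrow> finite (S i)"
    and "\<And>i j. i \<in> J \<Longrightarrow> j \<in> J \<Longrightarrow> card (S i) = card (S j)"
    and "\<And>i j. i \<in> J \<Longrightarrow> j \<in> J \<Longrightarrow> sum (f i) (S i) = sum (f j) (S j)"
  shows "\<exists>c. \<forall>i\<in>J. \<forall>z\<in>S i. f i z = c"
proof (cases "\<exists>i\<in>J. S i \<noteq> {}")
  case False
  then show ?thesis by auto
next
  case True
  then obtain i0 z0 where i0: "i0 \<in> J" and z0: "z0 \<in> S i0" by blast
  have "f i z = f i0 z0" if i: "i \<in> J" and z: "z \<in> S i" for i z
  proof -
    obtain c where c: "\<forall>z\<in>S i. f i z = c" using assms(1)[OF i] by blast
    obtain c0 where c0: "\<forall>z\<in>S i0. f i0 z = c0" using assms(1)[OF i0] by blast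
    have "card (S i0) * c = card (S i0) * c0"
      using assms(3,4)[OF i i0] c c0 by simp
    moreover have "card (S i0) \<noteq> 0"
      using z0 assms(2)[OF i0] by auto
    ultimately show ?thesis using c c0 z z0 by simp
  qed
  then show ?thesis by blast
qed

lemma constant_on_mult_iff:
  fixes f :: "'x \<Rightarrow> nat"
  assumes "m > 0"
  shows "(\<exists>c. \<forall>z\<in>S. m * f z = c) \<longleftrightarrow> (\<exists>c. \<forall>z\<in>S. f z = c)"
proof
  assume "\<exists>c. \<forall>z\<in>S. m * f z = c"
  then obtain c where c: "\<forall>z\<in>S. m * f z = c"
    by blast
  have "f a = f b" if "a \<in> S" "b \<in> S" for a b
  proof -
    have "m * f a = m * f b"
      using c that by simp
    then show ?thesis
      using assms by simp
  qed
  then have "\<forall>a\<in>S. \<forall>b\<in>S. f a = f b"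
    by blast
  then show "\<exists>c. \<forall>z\<in>S. f z = c"
    by blast
qed auto

section \<open>Distances in graphs\<close>

lemma at_dist_unique: "at_dist E u w i \<Longrightarrow> at_dist E u w j \<Longrightarrow> i = j"
  unfolding at_dist_def by (metis linorder_neqE_nat)

lemma has_ecc_unique: "has_ecc E V u D \<Longrightarrow> has_ecc E V u D' \<Longrightarrow> D = D'"
  unfolding has_ecc_def by (metis at_dist_unique le_antisym)

lemma has_ecc_if_covered:
  assumes "V \<subseteq> (\<Union>i\<le>D. Gamma E i u)" "w \<in> V" "w \<in> Gamma E D u"
  shows "has_ecc E V u D"
  using assms unfolding has_ecc_def Gamma_def by blast

lemma Gamma_eq_Image: "Gamma E i u = (E ^^ i) `` {u} - (\<Union>j<i. (E ^^ j) `` {u})"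
  by (auto simp: Gamma_def at_dist_def)

lemma Gamma_0: "Gamma E 0 u = {u}"
  by (auto simp: Gamma_def at_dist_def)

lemma Gamma_1: "Gamma E 1 u = E `` {u} - {u}"
proof -
  have "{..<1::nat} = {0}"
    by auto
  then show ?thesis
    by (simp add: Gamma_eq_Image)
qed

lemma Gamma_2: "Gamma E 2 u = (E ^^ 2) `` {u} - ({u} \<union> E `` {u})"
proof -
  have "{..<2::nat} = {0, 1}"
    by auto
  then show ?thesis
    by (simp add: Gamma_eq_Image)
qed

lemma Gamma_3: "Gamma E 3 u = (E ^^ 3) `` {u} - ({u} \<union> E `` {u} \<union> (E ^^ 2) `` {u})"
proof -
  have "{..<3::nat} = {0, 1, 2}"
    by auto
  then show ?thesis
    by (simp add: Gamma_eq_Image Un_ac)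
qed

lemma Gamma_4:
  "Gamma E 4 u = (E ^^ 4) `` {u} - ({u} \<union> E `` {u} \<union> (E ^^ 2) `` {u} \<union> (E ^^ 3) `` {u})"
proof -
  have "{..<4::nat} = {0, 1, 2, 3}"
    by auto
  then show ?thesis
    by (simp add: Gamma_eq_Image Un_ac)
qed

lemma relpow_Suc_Image: "(E ^^ Suc n) `` A = E `` ((E ^^ n) `` A)"
  by (simp add: relcomp_Image)

lemma inc_edges_Image_Inl:
  "inc_edges P Bs I `` (Inl ` A) = Inr ` {B\<in>Bs. \<exists>p\<in>A \<inter> P. I p B}"
  unfolding inc_edges_def Image_def by blast

lemma inc_edges_Image_Inr:
  "inc_edges P Bs I `` (Inr ` C) = Inl ` {p\<in>P. \<exists>B\<in>C \<inter> Bs. I p B}"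
  unfolding inc_edges_def Image_def by blast

definition homogeneous_at :: "('v \<times> 'v) set \<Rightarrow> 'v set \<Rightarrow> nat \<Rightarrow> bool" where
  "homogeneous_at E Y i \<longleftrightarrow> (\<exists>c. \<forall>x\<in>Y. \<forall>y\<in>Gamma E 2 x. \<forall>z\<in>Gamma E i x \<inter> Gamma E i y.
      card (Gamma E 1 x \<inter> Gamma E 1 y \<inter> Gamma E (i - 1) z) = c)"

lemma two_Y_homogeneous_iff_homogeneous_at:
  assumes "\<forall>x\<in>Y. has_ecc E V x D" "Y \<noteq> {}" "D \<ge> 3"
  shows "two_Y_homogeneous E V Y \<longleftrightarrow> (\<forall>i\<in>{1..D-1}. homogeneous_at E Y i)"
proof -
  obtain x where x: "x \<in> Y"
    using assms(2) by blast
  have "D' = D" if "\<forall>x\<in>Y. has_ecc E V x D'" for D'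
    using has_ecc_unique[of E V x D' D] assms(1) that x by blast
  then show ?thesis
    using assms unfolding two_Y_homogeneous_def homogeneous_at_def by metis
qed

lemma homogeneous_at_1: "homogeneous_at E Y 1"
proof -
  have "Gamma E 1 x \<inter> Gamma E 1 y \<inter> Gamma E 0 z = {z}" if "z \<in> Gamma E 1 x \<inter> Gamma E 1 y" for x y z
    using that by (auto simp: Gamma_0)
  then show ?thesis
    unfolding homogeneous_at_def by (intro exI[of _ 1]) simp
qed

section \<open>Relations between the parameters\<close>

lemma second_moment_equation_iff:
  fixes k y l r t :: real
  assumes "y > 1" "l > 1" "k > y" and r: "(r - 1) * (y - 1) = (k - 1) * (l - 1)"
  shows "(l * (k - 2) + (r - l) * (t - 1)) * ((l - 1) * (y - 2) + k - 2) = l^2 * (k - 2)^2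
    \<longleftrightarrow> t * ((l - 1) * (y - 2) + k - 2) = k * y * l - k * l + k - y * l - y"
proof -
  have "(y - 1) * ((l * (k - 2) + (r - l) * (t - 1)) * ((l - 1) * (y - 2) + k - 2) - l^2 * (k - 2)^2)
      = (l - 1) * (k - y) * (t * ((l - 1) * (y - 2) + k - 2) - (k * y * l - k * l + k - y * l - y))"
    using r by algebra
  moreover have "y - 1 \<noteq> 0" "(l - 1) * (k - y) \<noteq> 0"
    using assms by auto
  ultimately show ?thesis
    by (metis (no_types, lifting) eq_iff_diff_eq_0 mult_eq_0_iff)
qed

lemma first_formula_iff:
  fixes k y l r t :: real
  assumes "y \<ge> 2" "l > 1" "k > y" and r: "(r - 1) * (y - 1) = (k - 1) * (l - 1)"
  shows "k = (y - 1) * (r - l) * (t - 1) / (l * (t - y)) + 2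
    \<longleftrightarrow> t * ((l - 1) * (y - 2) + k - 2) = k * y * l - k * l + k - y * l - y"
proof (cases "t = y")
  case True
  have "(k * y * l - k * l + k - y * l - y) - y * ((l - 1) * (y - 2) + k - 2) = (y - 1) * (l - 1) * (k - y)"
    by algebra
  moreover have "(y - 1) * (l - 1) * (k - y) \<noteq> 0" "k \<noteq> 2"
    using assms by auto
  ultimately show ?thesis
    using True by auto
next
  case False
  then have "l * (t - y) \<noteq> 0"
    using assms by simp
  then have "k = (y - 1) * (r - l) * (t - 1) / (l * (t - y)) + 2
      \<longleftrightarrow> (k - 2) * (l * (t - y)) - (y - 1) * (r - l) * (t - 1) = 0"
    by (simp add: field_simps)
  also have "(k - 2) * (l * (t - y)) - (y - 1) * (r - l) * (t - 1)
      = t * ((l - 1) * (y - 2) + k - 2) - (k * y * l - k * l + k - y * l - y)"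
    using r by algebra
  finally show ?thesis
    by simp
qed

lemma second_formula_iff:
  fixes k y l r t :: real
  assumes "y > 1" "l > 1" and r: "(r - 1) * (y - 1) = (k - 1) * (l - 1)"
    and t: "t * ((l - 1) * (y - 2) + k - 2) = k * y * l - k * l + k - y * l - y"
    and M: "(l - 1) * (y - 2) + k - 2 \<noteq> 0"
  shows "t = (k - 1) * (r * (y - 1) - l * (k - y - 1)) / (l * (y - 1))
    \<longleftrightarrow> (k - y) * (k - l - y) * (k - l - 1) = 0"
proof -
  have "l * (y - 1) \<noteq> 0"
    using assms by simp
  then have "t = (k - 1) * (r * (y - 1) - l * (k - y - 1)) / (l * (y - 1))
      \<longleftrightarrow> t * (l * (y - 1)) - (k - 1) * (r * (y - 1) - l * (k - y - 1)) = 0"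
    by (simp add: field_simps)
  also have "\<dots> \<longleftrightarrow>
      ((l - 1) * (y - 2) + k - 2) * (t * (l * (y - 1)) - (k - 1) * (r * (y - 1) - l * (k - y - 1))) = 0"
    using M by simp
  also have "((l - 1) * (y - 2) + k - 2) * (t * (l * (y - 1)) - (k - 1) * (r * (y - 1) - l * (k - y - 1)))
      = (k - y) * (k - l - y) * (k - l - 1)"
    using r t by algebra
  finally show ?thesis .
qed

text \<open>After eliminating r and b by the parameter relations, and t * ((l - 1) * (y - 2) + k - 2)
  by the second moment equation, the defect of the third moment equation factors.\<close>
lemma third_moment_defect_factorization:
  fixes k y l r t b :: real
  assumes r: "(r - 1) * (y - 1) = (k - 1) * (l - 1)"
    and t: "t * ((l - 1) * (y - 2) + k - 2) = k * y * l - k * l + k - y * l - y"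
    and b: "l * t * (b - r) = r * (k - 1) * (r - l)"
  shows "(y - 1)^3 * ((l - 1) * (y - 2) + k - 2)^2 * t
      * ((b - 2 * r + l) * (l * y * (k * r - k - y * (2 * r - l - 1))
          + l * (l - 1) * (y * (r + (k - 1) * l) + (k - y) * t * l - 2 * k * y - y^2 * (2 * r - l - 2)))
        - l^2 * (k * r - k - y * (2 * r - l - 1))^2)
    = (l - 1)^3 * (k - y)^4 * ((k - l - y) * (k - l - 1) * (k * y - y^2 - l))"
proof -
  define M where "M = (l - 1) * (y - 2) + k - 2"
  define S where "S = k * r - k - y * (2 * r - l - 1)"
  define Q where "Q = y * (r + (k - 1) * l) + (k - y) * t * l - 2 * k * y - y^2 * (2 * r - l - 2)"
  define Z where "Z = b - 2 * r + l"
  define PZ where "PZ = k^3*l - k^3 + k^2*y*l^2 - 2*k^2*y*l + 2*k^2*y - 2*k^2*l^2 + k^2 - k*y^2*l^2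
    + k*y^2*l - k*y^2 - 2*k*y + 3*k*l^2 + y^2*l^2 + y^2 - 2*l^2"
  define PQ where "PQ = k*y^2*l - 2*k*y*l - k*y + k*l - y^3*l + y^2*l + y^2 + y*l"
  define T0 where "T0 = k * y * l - k * l + k - y * l - y"
  have tM: "t * M = T0"
    using t unfolding M_def T0_def .
  have Z_eq: "l * t * M * (y - 1)^2 * Z = (l - 1) * (k - y) * PZ"
    unfolding M_def Z_def PZ_def using r t b by algebra
  have S_eq: "(y - 1) * S = (l - 1) * (k - y) * (k - y - 1)"
    unfolding S_def using r by algebra
  have Q_eq: "((y - 1) * M) * Q = (l - 1) * (k - y) * PQ"
    unfolding M_def Q_def PQ_def using r t by algebra
  have elimination: "PZ * (y * (k - y - 1) * M + (l - 1) * PQ) - l^2 * (k - y - 1)^2 * (y - 1) * M * T0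
      = (l - 1) * (k - y)^2 * (k - l - y) * (k - l - 1) * (k * y - y^2 - l)"
    unfolding M_def PQ_def PZ_def T0_def by algebra
  have "(y - 1)^3 * M^2 * t * (Z * (l * y * S + l * (l - 1) * Q) - l^2 * S^2)
      = (l * t * M * (y - 1)^2 * Z) * (y * M * ((y - 1) * S) + (l - 1) * (((y - 1) * M) * Q))
        - l^2 * (y - 1) * M * (t * M) * ((y - 1) * S)^2"
    by algebra
  also have "\<dots> = (l - 1)^3 * (k - y)^4 * ((k - l - y) * (k - l - 1) * (k * y - y^2 - l))"
    unfolding Z_eq S_eq Q_eq tM using elimination by algebra
  finally show ?thesis
    unfolding M_def S_def Q_def Z_def .
qed

lemma third_moment_equation_iff:
  fixes k y l r t b :: real
  assumes "y > 1" "l > 1" "k > y" "t > 0"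
    and r: "(r - 1) * (y - 1) = (k - 1) * (l - 1)"
    and t: "t * ((l - 1) * (y - 2) + k - 2) = k * y * l - k * l + k - y * l - y"
    and b: "l * t * (b - r) = r * (k - 1) * (r - l)"
    and M: "(l - 1) * (y - 2) + k - 2 \<noteq> 0"
  shows "(b - 2 * r + l) * (l * y * (k * r - k - y * (2 * r - l - 1))
        + l * (l - 1) * (y * (r + (k - 1) * l) + (k - y) * t * l - 2 * k * y - y^2 * (2 * r - l - 2)))
      = l^2 * (k * r - k - y * (2 * r - l - 1))^2
    \<longleftrightarrow> (k - l - y) * (k - l - 1) * (k * y - y^2 - l) = 0"
proof -
  have "(y - 1)^3 * ((l - 1) * (y - 2) + k - 2)^2 * t \<noteq> 0" "(l - 1)^3 * (k - y)^4 \<noteq> 0"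
    using assms by auto
  then show ?thesis
    using third_moment_defect_factorization[OF r t b]
    by (metis (no_types, lifting) eq_iff_diff_eq_0 mult_eq_0_iff)
qed

lemma formulas_fail_if_t_eq_0:
  fixes k y l r :: real
  assumes "y > 1" "l > 1" "k > 1" and r: "(r - 1) * (y - 1) = (k - 1) * (l - 1)"
  shows "\<not> (k = (y - 1) * (r - l) * (0 - 1) / (l * (0 - y)) + 2
     \<and> 0 = (k - 1) * (r * (y - 1) - l * (k - y - 1)) / (l * (y - 1)))"
proof
  assume formulas: "k = (y - 1) * (r - l) * (0 - 1) / (l * (0 - y)) + 2
     \<and> 0 = (k - 1) * (r * (y - 1) - l * (k - y - 1)) / (l * (y - 1))"
  have ly: "l * (0 - y) \<noteq> 0" "l * (y - 1) \<noteq> 0"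
    using assms by auto
  have "(k - 1) * (r * (y - 1) - l * (k - y - 1)) = 0"
    using formulas ly(2) by (simp add: field_simps)
  then have "r * (y - 1) = l * (k - y - 1)"
    using assms by simp
  moreover have "(k - 2) * (l * (0 - y)) = (y - 1) * (r - l) * (0 - 1)"
    using formulas ly(1) by (simp add: field_simps)
  ultimately have "l * y * (y - 1) * (l + 1) = 0"
    using r by algebra
  then show False
    using assms by simp
qed

lemma second_formula_iff_third_moment_equation:
  fixes k y l r t b :: real
  assumes y: "y \<ge> 2" and l: "l \<ge> 2" and ky: "k \<ge> y + 1" and t: "t \<ge> 1" and tk: "t < k"
    and r: "(r - 1) * (y - 1) = (k - 1) * (l - 1)"
    and tM: "t * ((l - 1) * (y - 2) + k - 2) = k * y * l - k * l + k - y * l - y"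
    and b: "l * t * (b - r) = r * (k - 1) * (r - l)"
  shows "t = (k - 1) * (r * (y - 1) - l * (k - y - 1)) / (l * (y - 1))
    \<longleftrightarrow> (b - 2 * r + l) * (l * y * (k * r - k - y * (2 * r - l - 1))
        + l * (l - 1) * (y * (r + (k - 1) * l) + (k - y) * t * l - 2 * k * y - y^2 * (2 * r - l - 2)))
      = l^2 * (k * r - k - y * (2 * r - l - 1))^2"
proof -
  let ?M = "(l - 1) * (y - 2) + k - 2"
  have M_pos: "?M > 0"
    using y l ky by (smt (verit) mult_nonneg_nonneg)
  have "(k - t) * ?M = (k - y) * (k - l - 1)"
    using tM by algebra
  then have "(k - y) * (k - l - 1) > 0"
    using M_pos tk by (metis diff_gt_0_iff_gt mult_pos_pos)
  then have kl: "k - l - 1 > 0"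
    using ky by (simp add: zero_less_mult_iff)
  have "(y - 1) * (k - y - 1) \<ge> 0"
    using y ky by simp
  then have "k * y - y^2 - l > 0"
    using kl by (simp add: algebra_simps power2_eq_square)
  then show ?thesis
    using second_formula_iff[OF _ _ r tM] third_moment_equation_iff[OF _ _ _ _ r tM b] y l t ky kl M_pos
    by auto
qed

lemma second_formula_if_t_eq_k:
  fixes k y l r t :: real
  assumes y: "y \<ge> 2" and l: "l \<ge> 2" and ky: "k \<ge> y + 1" and tk: "t = k"
    and r: "(r - 1) * (y - 1) = (k - 1) * (l - 1)"
    and tM: "t * ((l - 1) * (y - 2) + k - 2) = k * y * l - k * l + k - y * l - y"
  shows "t = (k - 1) * (r * (y - 1) - l * (k - y - 1)) / (l * (y - 1))"
proof -
  have "(k - t) * ((l - 1) * (y - 2) + k - 2) = (k - y) * (k - l - 1)"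
    using tM by algebra
  then have "(k - y) * (k - l - 1) = 0"
    using tk by simp
  moreover have "(l - 1) * (y - 2) + k - 2 \<noteq> 0"
    using y l ky by (smt (verit) mult_nonneg_nonneg)
  ultimately show ?thesis
    using second_formula_iff[OF _ _ r tM] y l by auto
qed

lemma formulas_iff_moment_equations:
  fixes k y l r t b :: real
  assumes y: "y \<ge> 2" and l: "l \<ge> 2" and ky: "k \<ge> y + 1" and t: "t \<ge> 1" and tk: "t \<le> k"
    and r: "(r - 1) * (y - 1) = (k - 1) * (l - 1)"
    and b: "l * t * (b - r) = r * (k - 1) * (r - l)"
  shows "(k = (y - 1) * (r - l) * (t - 1) / (l * (t - y)) + 2
      \<and> t = (k - 1) * (r * (y - 1) - l * (k - y - 1)) / (l * (y - 1)))
    \<longleftrightarrow> (l * (k - 2) + (r - l) * (t - 1)) * ((l - 1) * (y - 2) + k - 2) = l^2 * (k - 2)^2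
      \<and> (t < k \<longrightarrow> (b - 2 * r + l) * (l * y * (k * r - k - y * (2 * r - l - 1))
        + l * (l - 1) * (y * (r + (k - 1) * l) + (k - y) * t * l - 2 * k * y - y^2 * (2 * r - l - 2)))
        = l^2 * (k * r - k - y * (2 * r - l - 1))^2)"
proof (cases "t * ((l - 1) * (y - 2) + k - 2) = k * y * l - k * l + k - y * l - y")
  case False
  then show ?thesis
    using first_formula_iff[OF y _ _ r] second_moment_equation_iff[OF _ _ _ r] y l ky by simp
next
  case tM: True
  then show ?thesis
    using first_formula_iff[OF y _ _ r] second_moment_equation_iff[OF _ _ _ r]
      second_formula_iff_third_moment_equation[OF y l ky t _ r tM b]
      second_formula_if_t_eq_k[OF y l ky _ r tM] y l ky tk
    by (cases "t < k") auto
qed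

section \<open>Quasi-symmetric SPBIBDs with intersection numbers 0 and y\<close>

locale qs_spbibd =
  fixes P :: "'a set" and Bs :: "'b set" and I :: "'a \<Rightarrow> 'b \<Rightarrow> bool"
    and v b r k l1 t y :: nat
  assumes spbibd: "spbibd P Bs I v b r k l1 0 (k - 1) t"
    and quasi_symmetric: "quasi_symmetric P Bs I 0 y"
    and y_gt_1: "y > 1"
begin

definition blocks_through :: "'a \<Rightarrow> 'b set" where
  "blocks_through p = {B\<in>Bs. I p B}"

definition points_of :: "'b \<Rightarrow> 'a set" where
  "points_of B = {p\<in>P. I p B}"

definition collinear :: "'a \<Rightarrow> 'a \<Rightarrow> bool" where
  "collinear p q \<longleftrightarrow> p \<in> P \<and> q \<in> P \<and> p \<noteq> q \<and> (\<exists>B\<in>Bs. I p B \<and> I q B)"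

lemma design: "design P Bs I v b r k"
  using spbibd by (simp add: spbibd_def)

lemma finite_P: "finite P" and finite_Bs: "finite Bs" and card_Bs: "card Bs = b"
  and r_less_b: "r < b" and P_nonempty: "P \<noteq> {}"
  using design by (auto simp: design_def)

lemma finite_points_of: "finite (points_of B)"
  using finite_P by (simp add: points_of_def)

lemma finite_blocks_through: "finite (blocks_through p)"
  using finite_Bs by (simp add: blocks_through_def)

lemma card_points_of: "B \<in> Bs \<Longrightarrow> card (points_of B) = k"
  using design by (simp add: design_def points_of_def)

lemma card_blocks_through: "p \<in> P \<Longrightarrow> card (blocks_through p) = r"
  using design by (simp add: design_def blocks_through_def)

lemma mem_points_of [simp]: "p \<in> points_of B \<longleftrightarrow> p \<in> P \<and> I p B"
  by (simp add: points_of_def)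

lemma mem_blocks_through [simp]: "B \<in> blocks_through p \<longleftrightarrow> B \<in> Bs \<and> I p B"
  by (simp add: blocks_through_def)

lemma collinear_sym: "collinear p q \<Longrightarrow> collinear q p"
  unfolding collinear_def by blast

lemma collinearD: "collinear p q \<Longrightarrow> p \<in> P \<and> q \<in> P \<and> p \<noteq> q"
  unfolding collinear_def by blast

lemma finite_collinear: "finite {q. collinear p q}"
  by (rule finite_subset[OF _ finite_P]) (auto dest: collinearD)

lemma card_common_blocks_cases:
  assumes "p \<in> P" "q \<in> P" "p \<noteq> q"
  shows "card (blocks_through p \<inter> blocks_through q) \<in> {l1, 0}"
proof -
  have "lam P Bs I p q = l1 \<or> lam P Bs I p q = 0"
    using spbibd assms by (auto simp: spbibd_def)
  moreover have "lam P Bs I p q = card (blocks_through p \<inter> blocks_through q)"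
    unfolding lam_def by (rule arg_cong[where f = card]) auto
  ultimately show ?thesis
    by auto
qed

lemma points_of_Int: "points_of B \<inter> points_of C = {p\<in>P. I p B \<and> I p C}"
  by auto

lemma card_meet_cases:
  assumes "B \<in> Bs" "C \<in> Bs" "B \<noteq> C"
  shows "card (points_of B \<inter> points_of C) \<in> {0, y}"
  using quasi_symmetric assms unfolding quasi_symmetric_def points_of_Int by auto

lemma card_meet_eq_y:
  assumes "B \<in> Bs" "C \<in> Bs" "B \<noteq> C" "p \<in> points_of B" "p \<in> points_of C"
  shows "card (points_of B \<inter> points_of C) = y"
  using card_meet_cases[OF assms(1-3)] assms(4,5) finite_points_of by auto

lemma nonflag_condition:
  assumes "p \<in> P" "B \<in> Bs" "\<not> I p B"
  shows "card {q\<in>points_of B. card (blocks_through p \<inter> blocks_through q) = l1} = t"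
proof -
  have "{q\<in>points_of B. card (blocks_through p \<inter> blocks_through q) = l1}
      = {q\<in>P. I q B \<and> lam P Bs I p q = l1}"
    unfolding lam_def by (auto intro!: arg_cong[where f = card])
  then show ?thesis
    using spbibd assms unfolding spbibd_def by auto
qed

lemma two_blocks_meeting:
  obtains B C p q where "B \<in> Bs" "C \<in> Bs" "B \<noteq> C" "p \<noteq> q"
    "p \<in> points_of B \<inter> points_of C" "q \<in> points_of B \<inter> points_of C"
    "card (points_of B \<inter> points_of C) = y"
proof -
  obtain B C where BC: "B \<in> Bs" "C \<in> Bs" "B \<noteq> C" "card (points_of B \<inter> points_of C) = y"
    using quasi_symmetric unfolding quasi_symmetric_def points_of_Int by blast
  then have "\<not> card (points_of B \<inter> points_of C) \<le> Suc 0"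
    using y_gt_1 by simp
  then obtain p q where "p \<in> points_of B \<inter> points_of C" "q \<in> points_of B \<inter> points_of C" "p \<noteq> q"
    using card_le_Suc0_iff_eq[of "points_of B \<inter> points_of C"] finite_points_of by blast
  then show ?thesis using BC that by blast
qed

lemma l1_ge_2: "l1 \<ge> 2"
proof -
  obtain B C p q where BC: "B \<in> Bs" "C \<in> Bs" "B \<noteq> C" "p \<noteq> q"
    and pq: "p \<in> points_of B \<inter> points_of C" "q \<in> points_of B \<inter> points_of C"
    by (rule two_blocks_meeting)
  have "{B, C} \<subseteq> blocks_through p \<inter> blocks_through q"
    using BC pq by auto
  then have "2 \<le> card (blocks_through p \<inter> blocks_through q)"
    using BC(3) card_mono[OF _ \<open>{B, C} \<subseteq> _\<close>] finite_blocks_through by fastforce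
  then show ?thesis
    using card_common_blocks_cases[of p q] pq BC(4) by auto
qed

lemma y_le_k: "y \<le> k"
proof -
  obtain B C where "B \<in> Bs" "card (points_of B \<inter> points_of C) = y"
    by (rule two_blocks_meeting)
  then show ?thesis
    using card_mono[OF finite_points_of, of "points_of B \<inter> points_of C" B] card_points_of by auto
qed

lemma ex_collinear: "\<exists>p q. collinear p q"
  using two_blocks_meeting unfolding collinear_def by (metis IntD1 mem_points_of)

lemma collinear_iff_card_common_blocks:
  assumes "p \<in> P" "q \<in> P" "p \<noteq> q"
  shows "collinear p q \<longleftrightarrow> card (blocks_through p \<inter> blocks_through q) = l1"
proof -
  have "collinear p q \<longleftrightarrow> blocks_through p \<inter> blocks_through q \<noteq> {}"
    using assms unfolding collinear_def by auto
  also have "\<dots> \<longleftrightarrow> card (blocks_through p \<inter> blocks_through q) = l1"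
    using card_common_blocks_cases[OF assms] l1_ge_2 finite_blocks_through by auto
  finally show ?thesis .
qed

lemma card_common_blocks_collinear:
  "collinear p q \<Longrightarrow> card (blocks_through p \<inter> blocks_through q) = l1"
  using collinear_iff_card_common_blocks collinearD by blast

lemma card_collinear_points_of:
  assumes "p \<in> P" "B \<in> Bs" "\<not> I p B"
  shows "card {q\<in>points_of B. collinear p q} = t"
proof -
  have "{q\<in>points_of B. collinear p q}
      = {q\<in>points_of B. card (blocks_through p \<inter> blocks_through q) = l1}"
    using assms collinear_iff_card_common_blocks by auto
  then show ?thesis
    using nonflag_condition[OF assms] by simp
qed

lemma k_ge_2: "k \<ge> 2"
  using y_le_k y_gt_1 by simp

lemma l1_le_r: "l1 \<le> r"
proof -
  obtain p q where pq: "collinear p q"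
    using ex_collinear by blast
  have "card (blocks_through p \<inter> blocks_through q) \<le> card (blocks_through p)"
    by (intro card_mono finite_blocks_through) auto
  then show ?thesis
    using pq card_common_blocks_collinear card_blocks_through collinearD by metis
qed

lemma r_pos: "r > 0"
  using l1_le_r l1_ge_2 by simp

lemma collinear_on_block_through:
  assumes "x \<in> P" "B \<in> blocks_through x"
  shows "{q. collinear x q \<and> I q B} = points_of B - {x}"
  using assms unfolding collinear_def by auto

lemma blocks_through_filter: "{B\<in>blocks_through p. I q B} = blocks_through p \<inter> blocks_through q"
  by auto

lemma card_collinear_mult_l1:
  assumes x: "x \<in> P"
  shows "card {q. collinear x q} * l1 = r * (k - 1)"
proof -
  have "(\<Sum>B\<in>blocks_through x. card {q\<in>{q. collinear x q}. I q B})
      = l1 * card {q. collinear x q}"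
  proof (rule sum_multicount[OF finite_blocks_through finite_collinear], intro ballI)
    fix q assume "q \<in> {q. collinear x q}"
    then show "card {B\<in>blocks_through x. I q B} = l1"
      unfolding blocks_through_filter using card_common_blocks_collinear by simp
  qed
  moreover have "(\<Sum>B\<in>blocks_through x. card {q\<in>{q. collinear x q}. I q B}) = r * (k - 1)"
    using collinear_on_block_through[OF x] x card_blocks_through[OF x]
    by (simp add: card_points_of finite_points_of)
  ultimately show ?thesis
    by (simp add: mult.commute)
qed

lemma card_collinear_mult_l1_squared:
  assumes x: "x \<in> P"
  shows "card {q. collinear x q} * l1 * l1 = r * ((k - 1) + (r - 1) * (y - 1))"
proof -
  have "card {q. collinear x q} * l1 * l1
      = (\<Sum>q\<in>{q. collinear x q}. card {B\<in>blocks_through x. I q B} * card {C\<in>blocks_through x. I q C})"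
    unfolding blocks_through_filter by (simp add: card_common_blocks_collinear)
  also have "\<dots> = (\<Sum>B\<in>blocks_through x. \<Sum>C\<in>blocks_through x.
      card {q\<in>{q. collinear x q}. I q B \<and> I q C})"
    by (rule sum_card_mult_card_filter[OF finite_blocks_through finite_blocks_through finite_collinear])
  also have "\<dots> = r * ((k - 1) + (r - 1) * (y - 1))"
  proof (subst sum_sum_diagonal_off_diagonal[OF finite_blocks_through])
    fix B assume "B \<in> blocks_through x"
    then show "card {q\<in>{q. collinear x q}. I q B \<and> I q B} = k - 1"
      using collinear_on_block_through[OF x] x by (simp add: card_points_of finite_points_of)
  next
    fix B C assume B: "B \<in> blocks_through x" and C: "C \<in> blocks_through x" and "B \<noteq> C"
    then have "card (points_of B \<inter> points_of C) = y"
      using x by (intro card_meet_eq_y) auto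
    moreover have "{q\<in>{q. collinear x q}. I q B \<and> I q C} = points_of B \<inter> points_of C - {x}"
      using B C x unfolding collinear_def by auto
    ultimately show "card {q\<in>{q. collinear x q}. I q B \<and> I q C} = y - 1"
      using B C x finite_points_of by simp
  qed (simp add: card_blocks_through[OF x])
  finally show ?thesis .
qed

lemma r_y_l1_relation: "(real r - 1) * (real y - 1) = (real k - 1) * (real l1 - 1)"
proof -
  obtain x where x: "x \<in> P"
    using P_nonempty by blast
  define c where "c = real (card {q. collinear x q})"
  have first: "c * l1 = r * (real k - 1)"
    using arg_cong[OF card_collinear_mult_l1[OF x], of real] k_ge_2 by (simp add: c_def of_nat_diff)
  have second: "c * l1 * l1 = r * ((real k - 1) + (real r - 1) * (real y - 1))"
    using arg_cong[OF card_collinear_mult_l1_squared[OF x], of real] k_ge_2 r_pos y_gt_1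
    by (simp add: c_def of_nat_diff)
  have "c * l1 * l1 = r * (real k - 1) * l1"
    using first by simp
  then have "r * ((real k - 1) * (real l1 - 1)) = r * ((real r - 1) * (real y - 1))"
    using second by (simp add: algebra_simps)
  then show ?thesis
    using r_pos by simp
qed

lemma ex_block_not_through:
  assumes "x \<in> P"
  obtains C where "C \<in> Bs" "\<not> I x C"
proof -
  have "blocks_through x \<noteq> Bs"
    using card_blocks_through[OF assms] card_Bs r_less_b by auto
  then show ?thesis
    using that unfolding blocks_through_def by blast
qed

lemma t_le_k: "t \<le> k"
proof -
  obtain x where x: "x \<in> P"
    using P_nonempty by blast
  obtain C where C: "C \<in> Bs" "\<not> I x C"
    using ex_block_not_through[OF x] by blast
  have "card {q\<in>points_of C. collinear x q} \<le> card (points_of C)"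
    by (intro card_mono finite_points_of) auto
  then show ?thesis
    using card_collinear_points_of[OF x C] card_points_of[OF C(1)] by simp
qed

lemma ex_collinear_on_block:
  assumes "t \<ge> 1" "x \<in> P" "C \<in> Bs" "\<not> I x C"
  obtains q where "q \<in> points_of C" "collinear x q"
proof -
  have "card {q\<in>points_of C. collinear x q} \<noteq> 0"
    using card_collinear_points_of[OF assms(2-4)] assms(1) by simp
  then obtain q where "q \<in> {q\<in>points_of C. collinear x q}"
    by (metis card.empty ex_in_conv)
  then show ?thesis
    using that by blast
qed

text \<open>For a block C missing x and a point q of C collinear with x, a block through x and q
  meets C in y points; so y = k would put x on C.\<close>
lemma y_less_k:
  assumes "t \<ge> 1"
  shows "y < k"
proof (rule ccontr)
  assume "\<not> y < k"
  then have yk: "y = k"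
    using y_le_k by simp
  obtain x where x: "x \<in> P"
    using P_nonempty by blast
  obtain C where C: "C \<in> Bs" "\<not> I x C"
    using ex_block_not_through[OF x] by blast
  obtain q where q: "q \<in> points_of C" "collinear x q"
    using ex_collinear_on_block[OF assms x C] by blast
  then obtain B where B: "B \<in> Bs" "I x B" "I q B"
    unfolding collinear_def by blast
  have "card (points_of B \<inter> points_of C) = card (points_of B)"
    using card_meet_eq_y[OF B(1) C(1), of q] B C q card_points_of[OF B(1)] yk by auto
  then have "points_of B \<inter> points_of C = points_of B"
    by (rule card_subset_eq[OF finite_points_of Int_lower1])
  then have "points_of B \<subseteq> points_of C"
    by blast
  then show False
    using B C x by auto
qed

lemma l1_less_r:
  assumes "t \<ge> 1"
  shows "l1 < r"
proof -
  have "(real y - 1) * (real l1 - 1) < (real k - 1) * (real l1 - 1)"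
    using y_less_k[OF assms] l1_ge_2 by (intro mult_strict_right_mono) auto
  then have "(real l1 - 1) * (real y - 1) < (real r - 1) * (real y - 1)"
    using r_y_l1_relation by (simp add: mult.commute)
  then show ?thesis
    using y_gt_1 by (simp add: mult_less_cancel_right)
qed

lemma card_collinear_mult_r_minus_l1:
  assumes x: "x \<in> P"
  shows "card {q. collinear x q} * (r - l1) = t * (b - r)"
proof -
  have "(\<Sum>q\<in>{q. collinear x q}. card {C\<in>Bs - blocks_through x. I q C})
      = t * card (Bs - blocks_through x)"
  proof (rule sum_multicount[OF finite_collinear], use finite_Bs in simp, intro ballI)
    fix C assume "C \<in> Bs - blocks_through x"
    then have C: "C \<in> Bs" "\<not> I x C"
      by auto
    have "{q\<in>{q. collinear x q}. I q C} = {q\<in>points_of C. collinear x q}"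
      by (auto dest: collinearD)
    then show "card {q\<in>{q. collinear x q}. I q C} = t"
      using card_collinear_points_of[OF x C] by simp
  qed
  moreover have "{C\<in>Bs - blocks_through x. I q C} = blocks_through q - blocks_through x" for q
    by auto
  moreover have "card (Bs - blocks_through x) = b - r"
    using card_blocks_through[OF x] card_Bs finite_blocks_through
    by (simp add: card_Diff_subset blocks_through_def)
  moreover have "card (blocks_through q - blocks_through x) = r - l1" if q: "collinear x q" for q
    using card_common_blocks_collinear[OF collinear_sym[OF q]] card_blocks_through collinearD[OF q]
    by (simp add: card_Diff_subset_Int finite_blocks_through)
  ultimately show ?thesis
    by simp
qed

lemma b_relation: "real l1 * real t * (real b - real r) = real r * (real k - 1) * (real r - real l1)"
proof -
  obtain x where x: "x \<in> P"
    using P_nonempty by blast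
  define c where "c = real (card {q. collinear x q})"
  have t_count: "c * (real r - real l1) = real t * (real b - real r)"
    using arg_cong[OF card_collinear_mult_r_minus_l1[OF x], of real] l1_le_r r_less_b
    by (simp add: c_def of_nat_diff)
  have l1_count: "c * real l1 = real r * (real k - 1)"
    using arg_cong[OF card_collinear_mult_l1[OF x], of real] k_ge_2 by (simp add: c_def of_nat_diff)
  have "real l1 * real t * (real b - real r) = real l1 * (c * (real r - real l1))"
    by (simp only: mult.assoc t_count)
  also have "\<dots> = (c * real l1) * (real r - real l1)"
    by (simp only: ac_simps)
  finally show ?thesis
    by (simp only: l1_count)
qed

lemma collinear_if_t_eq_k:
  assumes tk: "t = k" and x: "x \<in> P" and q: "q \<in> P" "q \<noteq> x"
  shows "collinear x q"
proof -
  have "card (blocks_through q \<inter> blocks_through x) \<le> l1"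
    using card_common_blocks_cases[OF q(1) x q(2)] by auto
  then have "card (blocks_through q \<inter> blocks_through x) \<noteq> card (blocks_through q)"
    using l1_less_r k_ge_2 tk card_blocks_through[OF q(1)] by simp
  then have "\<not> blocks_through q \<subseteq> blocks_through x"
    by (auto simp: Int_absorb2)
  then obtain C where C: "C \<in> Bs" "I q C" "\<not> I x C"
    unfolding subset_iff mem_blocks_through by blast
  have "card {p\<in>points_of C. collinear x p} = card (points_of C)"
    using card_collinear_points_of[OF x C(1,3)] card_points_of[OF C(1)] tk by simp
  then have "{p\<in>points_of C. collinear x p} = points_of C"
    by (rule card_subset_eq[OF finite_points_of, rotated]) auto
  moreover have "q \<in> points_of C"
    using C q by simp
  ultimately show ?thesis
    by blast
qed

lemma ex_not_collinear_if_t_less_k: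
  assumes tk: "t < k" and x: "x \<in> P"
  obtains q where "q \<in> P" "q \<noteq> x" "\<not> collinear x q"
proof -
  obtain C where C: "C \<in> Bs" "\<not> I x C"
    using ex_block_not_through[OF x] by blast
  have "card {q\<in>points_of C. collinear x q} < card (points_of C)"
    using card_collinear_points_of[OF x C] card_points_of[OF C(1)] tk by simp
  then have "{q\<in>points_of C. collinear x q} \<noteq> points_of C"
    by auto
  then obtain q where "q \<in> points_of C" "\<not> collinear x q"
    by blast
  then show ?thesis
    using C that by auto
qed

section \<open>Distances from a point in the incidence graph\<close>

abbreviation edges :: "(('a + 'b) \<times> ('a + 'b)) set" where
  "edges \<equiv> inc_edges P Bs I"

abbreviation vertices :: "('a + 'b) set" where
  "vertices \<equiv> inc_vertices P Bs"

lemma ex_block_through: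
  assumes "p \<in> P"
  obtains B where "B \<in> Bs" "I p B"
proof -
  have "blocks_through p \<noteq> {}"
    using card_blocks_through[OF assms] r_pos by auto
  then show ?thesis
    using that by auto
qed

lemma edges_Image_point:
  assumes "x \<in> P"
  shows "edges `` {Inl x} = Inr ` blocks_through x"
proof -
  have "{B\<in>Bs. \<exists>p\<in>{x} \<inter> P. I p B} = blocks_through x"
    using assms by auto
  then show ?thesis
    using inc_edges_Image_Inl[of P Bs I "{x}"] by simp
qed

lemma edges_Image_blocks_through:
  assumes x: "x \<in> P"
  shows "edges `` (Inr ` blocks_through x) = Inl ` insert x {q. collinear x q}"
proof -
  obtain B where "B \<in> Bs" "I x B"
    using ex_block_through[OF x] .
  then have "{p\<in>P. \<exists>B\<in>blocks_through x \<inter> Bs. I p B} = insert x {q. collinear x q}"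
    using x unfolding collinear_def by auto
  then show ?thesis
    by (simp only: inc_edges_Image_Inr)
qed

lemma edges_Image_collinear_closure:
  assumes t: "t \<ge> 1" and x: "x \<in> P"
  shows "edges `` (Inl ` insert x {q. collinear x q}) = Inr ` Bs"
proof -
  have "{B\<in>Bs. \<exists>p\<in>insert x {q. collinear x q} \<inter> P. I p B} = Bs"
  proof (intro subset_antisym subsetI)
    fix C assume C: "C \<in> Bs"
    show "C \<in> {B\<in>Bs. \<exists>p\<in>insert x {q. collinear x q} \<inter> P. I p B}"
    proof (cases "I x C")
      case False
      then obtain q where "q \<in> points_of C" "collinear x q"
        using ex_collinear_on_block[OF t x C] by blast
      then show ?thesis
        using C by (auto dest: collinearD)
    qed (use C x in auto)
  qed auto
  then show ?thesis
    by (simp only: inc_edges_Image_Inl)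
qed

lemma edges_Image_collinear_closure_t_eq_0:
  assumes t: "t = 0" and x: "x \<in> P"
  shows "edges `` (Inl ` insert x {q. collinear x q}) = Inr ` blocks_through x"
proof -
  have "I x C" if C: "C \<in> Bs" "I q C" and q: "collinear x q" for q C
  proof (rule ccontr)
    assume "\<not> I x C"
    then have "card {p\<in>points_of C. collinear x p} = 0"
      using card_collinear_points_of[OF x C(1)] t by simp
    moreover have "finite {p\<in>points_of C. collinear x p}"
      by (rule finite_subset[OF _ finite_points_of]) auto
    moreover have "q \<in> {p\<in>points_of C. collinear x p}"
      using C q collinearD[OF q] by simp
    ultimately show False
      using card_0_eq by blast
  qed
  then have "{B\<in>Bs. \<exists>p\<in>insert x {q. collinear x q} \<inter> P. I p B} = blocks_through x"
    using x by auto
  then show ?thesis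
    by (simp only: inc_edges_Image_Inl)
qed

lemma edges_Image_blocks: "edges `` (Inr ` Bs) = Inl ` P"
proof -
  have "{p\<in>P. \<exists>B\<in>Bs \<inter> Bs. I p B} = P"
    using ex_block_through by blast
  then show ?thesis
    by (simp only: inc_edges_Image_Inr)
qed

lemma walks_from_point:
  assumes x: "x \<in> P"
  shows "(edges ^^ 2) `` {Inl x} = Inl ` insert x {q. collinear x q}"
    and "t \<ge> 1 \<Longrightarrow> (edges ^^ 3) `` {Inl x} = Inr ` Bs"
    and "t \<ge> 1 \<Longrightarrow> (edges ^^ 4) `` {Inl x} = Inl ` P"
proof -
  show two: "(edges ^^ 2) `` {Inl x} = Inl ` insert x {q. collinear x q}"
    using x by (simp add: numeral_eq_Suc relcomp_Image edges_Image_point edges_Image_blocks_through)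
  assume t: "t \<ge> 1"
  show three: "(edges ^^ 3) `` {Inl x} = Inr ` Bs"
    by (simp only: relpow_Suc_Image[of 2, simplified] two edges_Image_collinear_closure[OF t x])
  show "(edges ^^ 4) `` {Inl x} = Inl ` P"
    by (simp only: relpow_Suc_Image[of 3, simplified] three edges_Image_blocks)
qed

lemma Gamma_1_point:
  assumes x: "x \<in> P"
  shows "Gamma edges 1 (Inl x) = Inr ` blocks_through x"
  unfolding Gamma_1 using x by (auto simp: edges_Image_point)

lemma Gamma_2_point:
  assumes x: "x \<in> P"
  shows "Gamma edges 2 (Inl x) = Inl ` {q. collinear x q}"
  unfolding Gamma_2 using x by (auto simp: walks_from_point edges_Image_point dest: collinearD)

lemma Gamma_3_point:
  assumes t: "t \<ge> 1" and x: "x \<in> P"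
  shows "Gamma edges 3 (Inl x) = Inr ` (Bs - blocks_through x)"
  unfolding Gamma_3 using t x by (auto simp: walks_from_point edges_Image_point)

lemma Gamma_4_point:
  assumes t: "t \<ge> 1" and x: "x \<in> P"
  shows "Gamma edges 4 (Inl x) = Inl ` (P - insert x {q. collinear x q})"
  unfolding Gamma_4 using t x by (auto simp: walks_from_point edges_Image_point)

definition meeting_blocks :: "'b \<Rightarrow> 'b set" where
  "meeting_blocks z = {C\<in>Bs. C \<noteq> z \<and> (\<exists>p\<in>points_of z. I p C)}"

lemma Gamma_2_block:
  assumes z: "z \<in> Bs"
  shows "Gamma edges 2 (Inr z) = Inr ` meeting_blocks z"
proof -
  have one: "edges `` {Inr z} = Inl ` points_of z"
    using z inc_edges_Image_Inr[of P Bs I "{z}"] by (simp add: points_of_def)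
  have "points_of z \<inter> P = points_of z"
    by auto
  then have "(edges ^^ 2) `` {Inr z} = Inr ` {C\<in>Bs. \<exists>p\<in>points_of z. I p C}"
    using one inc_edges_Image_Inl[of P Bs I "points_of z"] by (simp add: numeral_eq_Suc relcomp_Image)
  then show ?thesis
    using one unfolding Gamma_2 meeting_blocks_def by auto
qed

lemma ball_Gamma_2_point:
  "(\<forall>X\<in>Inl ` P. \<forall>Y\<in>Gamma edges 2 X. Q X Y) \<longleftrightarrow> (\<forall>x w. collinear x w \<longrightarrow> Q (Inl x) (Inl w))"
  by (auto simp: Gamma_2_point dest: collinearD)

lemma card_Gamma_1_Int:
  assumes "x \<in> P" "w \<in> P"
  shows "card (Gamma edges 1 (Inl x) \<inter> Gamma edges 1 (Inl w) \<inter> Inr ` C)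
    = card (blocks_through x \<inter> blocks_through w \<inter> C)"
  unfolding Gamma_1_point[OF assms(1)] Gamma_1_point[OF assms(2)]
  by (simp add: image_Int[symmetric] card_image)

lemma vertices_covered_from_point:
  assumes t: "t \<ge> 1" and x: "x \<in> P"
  shows "vertices \<subseteq> Gamma edges 0 (Inl x) \<union> Gamma edges 1 (Inl x) \<union> Gamma edges 2 (Inl x)
    \<union> Gamma edges 3 (Inl x) \<union> Gamma edges 4 (Inl x)"
  unfolding Gamma_0 Gamma_1_point[OF x] Gamma_2_point[OF x] Gamma_3_point[OF t x]
    Gamma_4_point[OF t x]
  using x by (auto simp: inc_vertices_def)

lemma has_ecc_3_if_t_eq_k:
  assumes tk: "t = k" and x: "x \<in> P"
  shows "has_ecc edges vertices (Inl x) 3"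
proof -
  have t: "t \<ge> 1"
    using tk k_ge_2 by simp
  have "Gamma edges 4 (Inl x) = {}"
    using collinear_if_t_eq_k[OF tk x] by (auto simp: Gamma_4_point[OF t x])
  moreover have "{..3::nat} = {0, 1, 2, 3}"
    by auto
  ultimately have "vertices \<subseteq> (\<Union>i\<le>3. Gamma edges i (Inl x))"
    using vertices_covered_from_point[OF t x] by auto
  moreover obtain C where "C \<in> Bs" "\<not> I x C"
    using ex_block_not_through[OF x] .
  ultimately show ?thesis
    using x by (intro has_ecc_if_covered[where w = "Inr C"]) (auto simp: inc_vertices_def Gamma_3_point[OF t])
qed

lemma has_ecc_4_if_t_less_k:
  assumes t: "t \<ge> 1" and tk: "t < k" and x: "x \<in> P"
  shows "has_ecc edges vertices (Inl x) 4"
proof -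
  have "{..4::nat} = {0, 1, 2, 3, 4}"
    by auto
  then have "vertices \<subseteq> (\<Union>i\<le>4. Gamma edges i (Inl x))"
    using vertices_covered_from_point[OF t x] by auto
  moreover obtain q where "q \<in> P" "q \<noteq> x" "\<not> collinear x q"
    using ex_not_collinear_if_t_less_k[OF tk x] .
  ultimately show ?thesis
    using x by (intro has_ecc_if_covered[where w = "Inl q"]) (auto simp: inc_vertices_def Gamma_4_point[OF t])
qed

text \<open>For t = 0 the walks from a point x never leave x, its collinear points and the blocks
  through x, so the blocks missing x are unreachable.\<close>
lemma not_has_ecc_if_t_eq_0:
  assumes t: "t = 0" and x: "x \<in> P"
  shows "\<not> has_ecc edges vertices (Inl x) D"
proof
  define S where "S = Inl ` insert x {q. collinear x q} \<union> Inr ` blocks_through x"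
  have closed: "edges `` S \<subseteq> S"
    unfolding S_def Image_Un edges_Image_collinear_closure_t_eq_0[OF t x]
      edges_Image_blocks_through[OF x]
    by blast
  have reachable: "(edges ^^ n) `` {Inl x} \<subseteq> S" for n
  proof (induction n)
    case 0
    then show ?case
      by (simp add: S_def)
  next
    case (Suc n)
    then show ?case
      using closed Image_mono[OF order_refl Suc.IH, of edges] by (simp only: relpow_Suc_Image)
  qed
  obtain C where C: "C \<in> Bs" "\<not> I x C"
    using ex_block_not_through[OF x] .
  assume "has_ecc edges vertices (Inl x) D"
  then obtain i where "(Inl x, Inr C) \<in> edges ^^ i"
    using C unfolding has_ecc_def at_dist_def inc_vertices_def by blast
  then have "Inr C \<in> S"
    using reachable[of i] by blast
  then show False
    using C by (auto simp: S_def)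
qed

section \<open>Homogeneity at distance 2\<close>

lemma homogeneous_at_2_iff:
  "homogeneous_at edges (Inl ` P) 2 \<longleftrightarrow>
    (\<exists>c. \<forall>x w. collinear x w \<longrightarrow> (\<forall>z\<in>{z. collinear x z \<and> collinear w z}.
      card (blocks_through x \<inter> blocks_through w \<inter> blocks_through z) = c))"
proof -
  have "(\<forall>Z\<in>Gamma edges 2 (Inl x) \<inter> Gamma edges 2 (Inl w).
      card (Gamma edges 1 (Inl x) \<inter> Gamma edges 1 (Inl w) \<inter> Gamma edges (2 - 1) Z) = c)
    \<longleftrightarrow> (\<forall>z\<in>{z. collinear x z \<and> collinear w z}.
      card (blocks_through x \<inter> blocks_through w \<inter> blocks_through z) = c)"
    if xw: "collinear x w" for x w c
  proof -
    have "Gamma edges 2 (Inl x) \<inter> Gamma edges 2 (Inl w) = Inl ` {z. collinear x z \<and> collinear w z}"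
      using collinearD[OF xw] by (auto simp: Gamma_2_point)
    moreover have "Gamma edges (2 - 1) (Inl z) = Inr ` blocks_through z" if "collinear x z" for z
      using Gamma_1_point collinearD[OF that] by simp
    ultimately show ?thesis
      using card_Gamma_1_Int collinearD[OF xw] by auto
  qed
  then show ?thesis
    unfolding homogeneous_at_def ball_Gamma_2_point by blast
qed

lemma finite_common_collinear: "finite {z. collinear x z \<and> collinear w z}"
  by (rule finite_subset[OF _ finite_collinear]) auto

lemma common_collinear_on_common_block:
  assumes xw: "collinear x w" and B: "B \<in> blocks_through x \<inter> blocks_through w"
  shows "{z\<in>{z. collinear x z \<and> collinear w z}. I z B} = points_of B - {x, w}"
  using collinearD[OF xw] B unfolding collinear_def by auto

lemma card_points_of_minus_two:
  assumes xw: "collinear x w" and B: "B \<in> blocks_through x \<inter> blocks_through w"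
  shows "card (points_of B - {x, w}) = k - 2"
  using collinearD[OF xw] B by (simp add: card_Diff_subset card_points_of finite_points_of)

lemma common_blocks_filter:
  "{B\<in>blocks_through x \<inter> blocks_through w. I z B} = blocks_through x \<inter> blocks_through w \<inter> blocks_through z"
  by auto

lemma sum_card_common_blocks:
  assumes xw: "collinear x w"
  shows "(\<Sum>z\<in>{z. collinear x z \<and> collinear w z}.
      card (blocks_through x \<inter> blocks_through w \<inter> blocks_through z)) = l1 * (k - 2)"
proof -
  have "(\<Sum>z\<in>{z. collinear x z \<and> collinear w z}.
      card {B\<in>blocks_through x \<inter> blocks_through w. I z B})
      = (k - 2) * card (blocks_through x \<inter> blocks_through w)"
    using common_collinear_on_common_block[OF xw] card_points_of_minus_two[OF xw]
    by (intro sum_multicount finite_common_collinear) (simp_all add: finite_blocks_through)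
  then show ?thesis
    unfolding common_blocks_filter[symmetric] using card_common_blocks_collinear[OF xw] by simp
qed

lemma sum_card_common_blocks_squared:
  assumes xw: "collinear x w"
  shows "(\<Sum>z\<in>{z. collinear x z \<and> collinear w z}.
      card (blocks_through x \<inter> blocks_through w \<inter> blocks_through z)^2)
    = l1 * ((k - 2) + (l1 - 1) * (y - 2))"
proof -
  let ?L = "blocks_through x \<inter> blocks_through w"
  have "(\<Sum>z\<in>{z. collinear x z \<and> collinear w z}. card {B\<in>?L. I z B} * card {C\<in>?L. I z C})
    = (\<Sum>B\<in>?L. \<Sum>C\<in>?L. card {z\<in>{z. collinear x z \<and> collinear w z}. I z B \<and> I z C})"
    by (intro sum_card_mult_card_filter finite_common_collinear) (simp_all add: finite_blocks_through)
  also have "\<dots> = l1 * ((k - 2) + (l1 - 1) * (y - 2))"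
  proof (subst sum_sum_diagonal_off_diagonal)
    fix B assume "B \<in> ?L"
    then show "card {z\<in>{z. collinear x z \<and> collinear w z}. I z B \<and> I z B} = k - 2"
      using common_collinear_on_common_block[OF xw] card_points_of_minus_two[OF xw] by simp
  next
    fix B C assume B: "B \<in> ?L" and C: "C \<in> ?L" and "B \<noteq> C"
    then have "card (points_of B \<inter> points_of C) = y"
      using collinearD[OF xw] by (intro card_meet_eq_y) auto
    moreover have "{z\<in>{z. collinear x z \<and> collinear w z}. I z B \<and> I z C}
        = points_of B \<inter> points_of C - {x, w}"
      using collinearD[OF xw] B C unfolding collinear_def by auto
    ultimately show "card {z\<in>{z. collinear x z \<and> collinear w z}. I z B \<and> I z C} = y - 2"
      using collinearD[OF xw] B C by (simp add: card_Diff_subset finite_points_of)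
  qed (simp_all add: finite_blocks_through card_common_blocks_collinear[OF xw])
  finally show ?thesis
    unfolding common_blocks_filter[symmetric] power2_eq_square .
qed

lemma card_common_collinear_on_block:
  assumes xw: "collinear x w" and B: "B \<in> blocks_through x"
  shows "card {z\<in>{z. collinear x z \<and> collinear w z}. I z B}
    = (if B \<in> blocks_through w then k - 2 else t - 1)"
proof (cases "B \<in> blocks_through w")
  case True
  then show ?thesis
    using B common_collinear_on_common_block[OF xw] card_points_of_minus_two[OF xw] by simp
next
  case False
  have x: "x \<in> P" and w: "w \<in> P"
    using collinearD[OF xw] by auto
  have "{z\<in>{z. collinear x z \<and> collinear w z}. I z B} = {q\<in>points_of B. collinear w q} - {x}"
    using B x unfolding collinear_def by auto
  moreover have "x \<in> {q\<in>points_of B. collinear w q}"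
    using B x collinear_sym[OF xw] by simp
  ultimately show ?thesis
    using False card_collinear_points_of[OF w, of B] B finite_points_of by simp
qed

text \<open>Double counting the flags (z, B) with B through x: a block through x but not w contains
  t points collinear with w, one of which is x.\<close>
lemma card_common_collinear:
  assumes xw: "collinear x w"
  shows "card {z. collinear x z \<and> collinear w z} * l1 = l1 * (k - 2) + (r - l1) * (t - 1)"
proof -
  let ?L = "blocks_through x \<inter> blocks_through w"
  have x: "x \<in> P"
    using collinearD[OF xw] by auto
  have "card {B\<in>blocks_through x. I z B} = l1" if "collinear x z" for z
    using card_common_blocks_collinear[OF that] blocks_through_filter by simp
  then have "(\<Sum>z\<in>{z. collinear x z \<and> collinear w z}. card {B\<in>blocks_through x. I z B})
      = card {z. collinear x z \<and> collinear w z} * l1"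
    by simp
  moreover have "(\<Sum>z\<in>{z. collinear x z \<and> collinear w z}. card {B\<in>blocks_through x. I z B})
      = (\<Sum>B\<in>blocks_through x. if B \<in> blocks_through w then k - 2 else t - 1)"
    using card_common_collinear_on_block[OF xw]
    by (intro sum_multicount_gen finite_common_collinear finite_blocks_through ballI)
  moreover have "(\<Sum>B\<in>blocks_through x. if B \<in> blocks_through w then k - 2 else t - 1)
      = l1 * (k - 2) + (r - l1) * (t - 1)"
  proof -
    have "card (blocks_through x - ?L) = r - l1"
      using card_blocks_through[OF x] card_common_blocks_collinear[OF xw] finite_blocks_through
      by (simp add: card_Diff_subset_Int Int_absorb)
    moreover have "blocks_through x \<inter> {B. B \<in> blocks_through w} = ?L"
      and "blocks_through x \<inter> - {B. B \<in> blocks_through w} = blocks_through x - ?L"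
      by auto
    ultimately show ?thesis
      using card_common_blocks_collinear[OF xw]
      by (simp only: sum.If_cases[OF finite_blocks_through] sum_constant) simp
  qed
  ultimately show ?thesis
    by simp
qed

lemma triple_count_constant_iff:
  assumes t: "t \<ge> 1" and xw: "collinear x w"
  shows "(\<exists>c. \<forall>z\<in>{z. collinear x z \<and> collinear w z}.
      card (blocks_through x \<inter> blocks_through w \<inter> blocks_through z) = c) \<longleftrightarrow>
    (real l1 * (real k - 2) + (real r - real l1) * (real t - 1)) * ((real l1 - 1) * (real y - 2) + real k - 2)
      = (real l1)^2 * (real k - 2)^2"
proof -
  let ?N = "{z. collinear x z \<and> collinear w z}"
  define f where "f z = card (blocks_through x \<inter> blocks_through w \<inter> blocks_through z)" for z
  have sum_f: "(\<Sum>z\<in>?N. real (f z)) = real l1 * (real k - 2)"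
    using arg_cong[OF sum_card_common_blocks[OF xw], of real] k_ge_2
    by (simp add: f_def of_nat_diff)
  have sum_f_squared: "(\<Sum>z\<in>?N. real (f z)^2) = real l1 * ((real k - 2) + (real l1 - 1) * (real y - 2))"
    using arg_cong[OF sum_card_common_blocks_squared[OF xw], of real] k_ge_2 y_gt_1 l1_ge_2
    by (simp add: f_def of_nat_diff)
  have card_N: "real (card ?N) * real l1 = real l1 * (real k - 2) + (real r - real l1) * (real t - 1)"
    using arg_cong[OF card_common_collinear[OF xw], of real] k_ge_2 t l1_le_r
    by (simp add: of_nat_diff)
  have l1_pos: "real l1 > 0"
    using l1_ge_2 by simp
  have "(\<exists>c. \<forall>z\<in>?N. f z = c) \<longleftrightarrow> real (card ?N) * (\<Sum>z\<in>?N. real (f z)^2) = (\<Sum>z\<in>?N. real (f z))^2"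
    by (rule constant_on_iff_card_mult_sum_squares[OF finite_common_collinear])
  also have "\<dots> \<longleftrightarrow> (real (card ?N) * real l1) * (\<Sum>z\<in>?N. real (f z)^2) = real l1 * (\<Sum>z\<in>?N. real (f z))^2"
    using l1_pos by (simp add: mult.assoc mult.left_commute)
  also have "\<dots> \<longleftrightarrow> real l1 * ((real l1 * (real k - 2) + (real r - real l1) * (real t - 1))
      * ((real l1 - 1) * (real y - 2) + real k - 2)) = real l1 * ((real l1)^2 * (real k - 2)^2)"
    unfolding card_N sum_f sum_f_squared by (simp add: algebra_simps power2_eq_square)
  finally show ?thesis
    using l1_pos by (simp add: f_def)
qed

lemma triple_counts_constant_iff:
  assumes t: "t \<ge> 1"
  shows "(\<exists>c. \<forall>x w. collinear x w \<longrightarrow> (\<forall>z\<in>{z. collinear x z \<and> collinear w z}.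
      card (blocks_through x \<inter> blocks_through w \<inter> blocks_through z) = c)) \<longleftrightarrow>
    (real l1 * (real k - 2) + (real r - real l1) * (real t - 1)) * ((real l1 - 1) * (real y - 2) + real k - 2)
      = (real l1)^2 * (real k - 2)^2"
    (is "(\<exists>c. \<forall>x w. collinear x w \<longrightarrow> (\<forall>z\<in>?N x w. ?f x w z = c)) \<longleftrightarrow> ?equation")
proof
  assume "\<exists>c. \<forall>x w. collinear x w \<longrightarrow> (\<forall>z\<in>?N x w. ?f x w z = c)"
  moreover obtain x w where "collinear x w"
    using ex_collinear by blast
  ultimately show ?equation
    using triple_count_constant_iff[OF t] by blast
next
  assume ?equation
  have "\<exists>c. \<forall>i\<in>{(x, w). collinear x w}. \<forall>z\<in>case_prod ?N i. case_prod ?f i z = c"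
  proof (rule constant_on_family)
    fix i assume "i \<in> {(x, w). collinear x w}"
    then show "\<exists>c. \<forall>z\<in>case_prod ?N i. case_prod ?f i z = c"
      using triple_count_constant_iff[OF t] \<open>?equation\<close> by auto
  next
    fix i j assume "i \<in> {(x, w). collinear x w}" "j \<in> {(x, w). collinear x w}"
    then obtain x w x' w' where i: "i = (x, w)" "collinear x w" and j: "j = (x', w')" "collinear x' w'"
      by blast
    have "card (?N x w) * l1 = card (?N x' w') * l1"
      using card_common_collinear[OF i(2)] card_common_collinear[OF j(2)] by simp
    then show "card (case_prod ?N i) = card (case_prod ?N j)"
      using i j l1_ge_2 by simp
    show "sum (case_prod ?f i) (case_prod ?N i) = sum (case_prod ?f j) (case_prod ?N j)"
      using i j sum_card_common_blocks by simp
  qed (auto simp: finite_common_collinear)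
  then show "\<exists>c. \<forall>x w. collinear x w \<longrightarrow> (\<forall>z\<in>?N x w. ?f x w z = c)"
    by auto
qed

section \<open>Homogeneity at distance 3\<close>

lemma homogeneous_at_3_iff:
  assumes t: "t \<ge> 1"
  shows "homogeneous_at edges (Inl ` P) 3 \<longleftrightarrow>
    (\<exists>c. \<forall>x w. collinear x w \<longrightarrow> (\<forall>z\<in>{z\<in>Bs. \<not> I x z \<and> \<not> I w z}.
      card (blocks_through x \<inter> blocks_through w \<inter> meeting_blocks z) = c))"
proof -
  have "(\<forall>Z\<in>Gamma edges 3 (Inl x) \<inter> Gamma edges 3 (Inl w).
      card (Gamma edges 1 (Inl x) \<inter> Gamma edges 1 (Inl w) \<inter> Gamma edges (3 - 1) Z) = c)
    \<longleftrightarrow> (\<forall>z\<in>{z\<in>Bs. \<not> I x z \<and> \<not> I w z}.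
      card (blocks_through x \<inter> blocks_through w \<inter> meeting_blocks z) = c)"
    if xw: "collinear x w" for x w c
  proof -
    have "Gamma edges 3 (Inl x) \<inter> Gamma edges 3 (Inl w) = Inr ` {z\<in>Bs. \<not> I x z \<and> \<not> I w z}"
      using collinearD[OF xw] by (auto simp: Gamma_3_point[OF t])
    moreover have "Gamma edges (3 - 1) (Inr z) = Inr ` meeting_blocks z" if "z \<in> Bs" for z
      using Gamma_2_block[OF that] by simp
    ultimately show ?thesis
      using card_Gamma_1_Int collinearD[OF xw] by auto
  qed
  then show ?thesis
    unfolding homogeneous_at_def ball_Gamma_2_point by blast
qed

abbreviation meet_size :: "'b \<Rightarrow> 'b \<Rightarrow> nat" where
  "meet_size z B \<equiv> card (points_of z \<inter> points_of B)"

lemma meet_size_eq_card_filter: "meet_size z B = card {p\<in>points_of B. I p z}"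
  by (rule arg_cong[where f = card]) auto

lemma sum_meet_size:
  assumes "B \<in> Bs"
  shows "(\<Sum>z\<in>Bs. meet_size z B) = k * r"
proof -
  have "(\<Sum>z\<in>Bs. card {p\<in>points_of B. I p z}) = r * card (points_of B)"
    using card_blocks_through blocks_through_def
    by (intro sum_multicount finite_Bs finite_points_of) auto
  then show ?thesis
    using card_points_of[OF assms] by (simp add: meet_size_eq_card_filter)
qed

lemma sum_card_common_blocks_over_block:
  assumes p: "p \<in> P" and C: "C \<in> Bs"
  shows "(\<Sum>q\<in>points_of C. card (blocks_through p \<inter> blocks_through q))
    = (if I p C then r + (k - 1) * l1 else t * l1)"
proof (cases "I p C")
  case True
  have "(\<Sum>q\<in>points_of C - {p}. card (blocks_through p \<inter> blocks_through q)) = (k - 1) * l1"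
  proof -
    have "card (blocks_through p \<inter> blocks_through q) = l1" if "q \<in> points_of C - {p}" for q
      using that True p C by (intro card_common_blocks_collinear) (auto simp: collinear_def)
    then show ?thesis
      using True p card_points_of[OF C] finite_points_of by simp
  qed
  moreover have "p \<in> points_of C"
    using True p by simp
  ultimately show ?thesis
    using True card_blocks_through[OF p] finite_points_of by (simp add: sum.remove)
next
  case False
  have "card (blocks_through p \<inter> blocks_through q) = (if collinear p q then l1 else 0)"
    if "q \<in> points_of C" for q
    using that False p card_common_blocks_cases[of p q] collinear_iff_card_common_blocks[of p q]
    by auto
  then have "(\<Sum>q\<in>points_of C. card (blocks_through p \<inter> blocks_through q))
      = l1 * card {q\<in>points_of C. collinear p q}"
    using finite_points_of by (simp add: sum.If_cases Int_def)
  then show ?thesis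
    using False card_collinear_points_of[OF p C False] by simp
qed

lemma common_blocks_eq: "{z\<in>Bs. I p z \<and> I q z} = blocks_through p \<inter> blocks_through q"
  by auto

lemma sum_meet_size_mult:
  assumes B: "B \<in> Bs" and C: "C \<in> Bs" and BC: "meet_size B C = y"
  shows "(\<Sum>z\<in>Bs. meet_size z B * meet_size z C) = y * (r + (k - 1) * l1) + (k - y) * (t * l1)"
proof -
  have "(\<Sum>z\<in>Bs. meet_size z B * meet_size z C)
      = (\<Sum>p\<in>points_of B. \<Sum>q\<in>points_of C. card (blocks_through p \<inter> blocks_through q))"
    unfolding meet_size_eq_card_filter common_blocks_eq[symmetric]
    by (rule sum_card_mult_card_filter[OF finite_points_of finite_points_of finite_Bs])
  also have "\<dots> = (\<Sum>p\<in>points_of B. if I p C then r + (k - 1) * l1 else t * l1)"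
  proof (intro sum.cong refl)
    fix p assume "p \<in> points_of B"
    then show "(\<Sum>q\<in>points_of C. card (blocks_through p \<inter> blocks_through q))
        = (if I p C then r + (k - 1) * l1 else t * l1)"
      using sum_card_common_blocks_over_block[OF _ C, of p] by simp
  qed
  also have "\<dots> = y * (r + (k - 1) * l1) + (k - y) * (t * l1)"
  proof -
    have "points_of B \<inter> {p. I p C} = points_of B \<inter> points_of C"
      and "points_of B \<inter> - {p. I p C} = points_of B - points_of C"
      by auto
    moreover have "card (points_of B - points_of C) = k - y"
      using BC card_points_of[OF B] finite_points_of by (simp add: card_Diff_subset_Int)
    ultimately show ?thesis
      using BC by (simp only: sum.If_cases[OF finite_points_of] sum_constant) simp
  qed
  finally show ?thesis .
qed

lemma sum_blocks_split:
  "(\<Sum>z\<in>Bs. g z)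
    = (\<Sum>z\<in>{z\<in>Bs. \<not> I x z \<and> \<not> I w z}. g z) + (\<Sum>z\<in>blocks_through x \<union> blocks_through w. g z)"
proof -
  have "Bs = {z\<in>Bs. \<not> I x z \<and> \<not> I w z} \<union> (blocks_through x \<union> blocks_through w)"
    by auto
  moreover have "{z\<in>Bs. \<not> I x z \<and> \<not> I w z} \<inter> (blocks_through x \<union> blocks_through w) = {}"
    by auto
  ultimately show ?thesis
    using finite_Bs finite_blocks_through by (metis finite_Un sum.union_disjoint)
qed

lemma real_card_blocks_through_pair:
  assumes xw: "collinear x w"
  shows "real (card (blocks_through x \<union> blocks_through w)) = 2 * real r - real l1"
proof -
  have "card (blocks_through x \<union> blocks_through w) + card (blocks_through x \<inter> blocks_through w)
      = card (blocks_through x) + card (blocks_through w)"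
    by (rule card_Un_Int[OF finite_blocks_through finite_blocks_through, symmetric])
  then show ?thesis
    using card_common_blocks_collinear[OF xw] card_blocks_through collinearD[OF xw]
    by (simp flip: of_nat_add)
qed

lemma meet_size_through_pair:
  assumes xw: "collinear x w" and B: "B \<in> blocks_through x \<inter> blocks_through w"
    and z: "z \<in> blocks_through x \<union> blocks_through w" "z \<noteq> B"
  shows "meet_size z B = y"
  using collinearD[OF xw] B z by (auto intro: card_meet_eq_y)

lemma sum_meet_size_through_pair:
  assumes xw: "collinear x w" and B: "B \<in> blocks_through x \<inter> blocks_through w"
  shows "(\<Sum>z\<in>blocks_through x \<union> blocks_through w. real (meet_size z B))
    = real k + real y * (2 * real r - real l1 - 1)"
proof -
  let ?U = "blocks_through x \<union> blocks_through w"
  have BU: "B \<in> ?U"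
    using B by blast
  then have "card ?U \<ge> 1"
    using finite_blocks_through by (auto simp: Suc_le_eq card_gt_0_iff)
  then have "real (card (?U - {B})) = 2 * real r - real l1 - 1"
    using BU finite_blocks_through real_card_blocks_through_pair[OF xw]
    by (simp add: card_Diff_singleton of_nat_diff)
  moreover have "(\<Sum>z\<in>?U. real (meet_size z B)) = real (meet_size B B) + (\<Sum>z\<in>?U - {B}. real y)"
    using meet_size_through_pair[OF xw B] BU finite_blocks_through by (simp add: sum.remove)
  ultimately show ?thesis
    using B card_points_of by (simp add: mult.commute)
qed

lemma sum_meet_size_mult_through_pair:
  assumes xw: "collinear x w"
    and B: "B \<in> blocks_through x \<inter> blocks_through w" and C: "C \<in> blocks_through x \<inter> blocks_through w"
    and BC: "B \<noteq> C"
  shows "(\<Sum>z\<in>blocks_through x \<union> blocks_through w. real (meet_size z B) * real (meet_size z C))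
    = 2 * real k * real y + (real y)^2 * (2 * real r - real l1 - 2)"
proof -
  let ?U = "blocks_through x \<union> blocks_through w"
  have BU: "B \<in> ?U" and CU: "C \<in> ?U - {B}"
    using B C BC by blast+
  have yBC: "meet_size B C = y" "meet_size C B = y"
    using meet_size_through_pair[OF xw B, of C] meet_size_through_pair[OF xw C, of B] BU CU BC by auto
  have "card ?U \<ge> 2"
    using BU CU finite_blocks_through card_mono[of ?U "{B, C}"] BC by auto
  then have card_rest: "real (card (?U - {B} - {C})) = 2 * real r - real l1 - 2"
    using BU CU finite_blocks_through real_card_blocks_through_pair[OF xw]
    by (simp add: card_Diff_singleton of_nat_diff)
  have "(\<Sum>z\<in>?U. real (meet_size z B) * real (meet_size z C))
      = real (meet_size B B) * real (meet_size B C) + real (meet_size C B) * real (meet_size C C)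
        + (\<Sum>z\<in>?U - {B} - {C}. real y * real y)"
    using meet_size_through_pair[OF xw B] meet_size_through_pair[OF xw C] BU CU finite_blocks_through
    by (simp add: sum.remove[of _ B] sum.remove[of _ C])
  then show ?thesis
    unfolding sum_constant card_rest using yBC B C card_points_of
    by (simp add: power2_eq_square algebra_simps)
qed

text \<open>For distinct blocks B, C through a collinear pair x, w, these are the sums of
  meet_size z B and of meet_size z B * meet_size z C over the blocks z missing x and w.\<close>
definition missing_meet_sum :: real where
  "missing_meet_sum = real k * real r - real k - real y * (2 * real r - real l1 - 1)"

definition missing_meet_product_sum :: real where
  "missing_meet_product_sum = real y * (real r + (real k - 1) * real l1) + (real k - real y) * real t * real l1
    - 2 * real k * real y - (real y)^2 * (2 * real r - real l1 - 2)"

lemma sum_meet_size_missing: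
  assumes xw: "collinear x w" and B: "B \<in> blocks_through x \<inter> blocks_through w"
  shows "(\<Sum>z\<in>{z\<in>Bs. \<not> I x z \<and> \<not> I w z}. real (meet_size z B)) = missing_meet_sum"
proof -
  have "(\<Sum>z\<in>Bs. real (meet_size z B)) = real k * real r"
    using arg_cong[OF sum_meet_size[of B], of real] B by simp
  then show ?thesis
    using sum_blocks_split[of "\<lambda>z. real (meet_size z B)" x w] sum_meet_size_through_pair[OF xw B]
    by (simp add: missing_meet_sum_def)
qed

lemma sum_meet_size_mult_missing:
  assumes xw: "collinear x w"
    and B: "B \<in> blocks_through x \<inter> blocks_through w" and C: "C \<in> blocks_through x \<inter> blocks_through w"
    and BC: "B \<noteq> C"
  shows "(\<Sum>z\<in>{z\<in>Bs. \<not> I x z \<and> \<not> I w z}. real (meet_size z B) * real (meet_size z C))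
    = missing_meet_product_sum"
proof -
  have "meet_size B C = y"
    using meet_size_through_pair[OF xw C, of B] B BC by auto
  then have "(\<Sum>z\<in>Bs. real (meet_size z B) * real (meet_size z C))
      = real y * (real r + (real k - 1) * real l1) + (real k - real y) * real t * real l1"
    using arg_cong[OF sum_meet_size_mult[of B C], of real] B C y_le_k k_ge_2
    by (simp add: of_nat_diff)
  then show ?thesis
    using sum_blocks_split[of "\<lambda>z. real (meet_size z B) * real (meet_size z C)" x w]
      sum_meet_size_mult_through_pair[OF xw B C BC]
    by (simp add: missing_meet_product_sum_def)
qed

lemma meet_size_missing_cases:
  assumes z: "z \<in> {z\<in>Bs. \<not> I x z \<and> \<not> I w z}" and B: "B \<in> blocks_through x \<inter> blocks_through w"
  shows "meet_size z B = (if B \<in> meeting_blocks z then y else 0)"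
proof -
  have zB: "B \<noteq> z" "z \<in> Bs" "B \<in> Bs"
    using z B by auto
  show ?thesis
  proof (cases "B \<in> meeting_blocks z")
    case True
    then show ?thesis
      using card_meet_eq_y[of z B] zB by (auto simp: meeting_blocks_def)
  next
    case False
    then have "points_of z \<inter> points_of B = {}"
      using zB by (auto simp: meeting_blocks_def)
    then show ?thesis
      using False by simp
  qed
qed

lemma sum_meet_size_eq_card_meeting:
  assumes z: "z \<in> {z\<in>Bs. \<not> I x z \<and> \<not> I w z}"
  shows "(\<Sum>B\<in>blocks_through x \<inter> blocks_through w. meet_size z B)
    = y * card (blocks_through x \<inter> blocks_through w \<inter> meeting_blocks z)"
proof -
  have "(\<Sum>B\<in>blocks_through x \<inter> blocks_through w. meet_size z B)
      = (\<Sum>B\<in>blocks_through x \<inter> blocks_through w. if B \<in> meeting_blocks z then y else 0)"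
    using meet_size_missing_cases[OF z] by (intro sum.cong) auto
  moreover have "blocks_through x \<inter> blocks_through w \<inter> {B. B \<in> meeting_blocks z}
      = blocks_through x \<inter> blocks_through w \<inter> meeting_blocks z"
    by auto
  moreover have "finite (blocks_through x \<inter> blocks_through w)"
    using finite_blocks_through by blast
  ultimately show ?thesis
    by (simp only: sum.If_cases sum_constant) (simp add: mult.commute)
qed

lemma real_card_blocks_missing:
  assumes xw: "collinear x w"
  shows "real (card {z\<in>Bs. \<not> I x z \<and> \<not> I w z}) = real b - 2 * real r + real l1"
proof -
  have "card {z\<in>Bs. \<not> I x z \<and> \<not> I w z} + card (blocks_through x \<union> blocks_through w) = b"
    using sum_blocks_split[of "\<lambda>_. 1::nat" x w] card_Bs by simp
  then show ?thesis
    using real_card_blocks_through_pair[OF xw] by (simp flip: of_nat_add)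
qed

lemma sum_meet_sums_missing:
  assumes xw: "collinear x w"
  shows "(\<Sum>z\<in>{z\<in>Bs. \<not> I x z \<and> \<not> I w z}. real (\<Sum>B\<in>blocks_through x \<inter> blocks_through w. meet_size z B))
      = real l1 * missing_meet_sum"
proof -
  let ?L = "blocks_through x \<inter> blocks_through w" and ?Z = "{z\<in>Bs. \<not> I x z \<and> \<not> I w z}"
  have "(\<Sum>z\<in>?Z. real (\<Sum>B\<in>?L. meet_size z B)) = (\<Sum>B\<in>?L. \<Sum>z\<in>?Z. real (meet_size z B))"
    by (simp add: sum.swap[of _ ?Z])
  also have "\<dots> = (\<Sum>B\<in>?L. missing_meet_sum)"
    using sum_meet_size_missing[OF xw] by simp
  finally show ?thesis
    using card_common_blocks_collinear[OF xw] by simp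
qed

lemma sum_meet_sums_squared_missing:
  assumes xw: "collinear x w"
  shows "(\<Sum>z\<in>{z\<in>Bs. \<not> I x z \<and> \<not> I w z}. real (\<Sum>B\<in>blocks_through x \<inter> blocks_through w. meet_size z B)^2)
      = real l1 * (real y * missing_meet_sum + (real l1 - 1) * missing_meet_product_sum)"
proof -
  let ?L = "blocks_through x \<inter> blocks_through w" and ?Z = "{z\<in>Bs. \<not> I x z \<and> \<not> I w z}"
  have "(\<Sum>z\<in>?Z. real (\<Sum>B\<in>?L. meet_size z B)^2)
      = (\<Sum>B\<in>?L. \<Sum>C\<in>?L. \<Sum>z\<in>?Z. real (meet_size z B) * real (meet_size z C))"
    by (simp add: power2_eq_square sum_product sum.swap[of _ ?Z])
  also have "\<dots> = real l1 * (real y * missing_meet_sum + (real l1 - 1) * missing_meet_product_sum)"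
  proof (subst sum_sum_diagonal_off_diagonal)
    fix B assume B: "B \<in> ?L"
    have "real (meet_size z B) * real (meet_size z B) = real y * real (meet_size z B)" if "z \<in> ?Z" for z
      using meet_size_missing_cases[OF that B] by simp
    then have "(\<Sum>z\<in>?Z. real (meet_size z B) * real (meet_size z B)) = (\<Sum>z\<in>?Z. real y * real (meet_size z B))"
      by (rule sum.cong[OF refl])
    also have "\<dots> = real y * missing_meet_sum"
      unfolding sum_distrib_left[symmetric] sum_meet_size_missing[OF xw B] ..
    finally show "(\<Sum>z\<in>?Z. real (meet_size z B) * real (meet_size z B)) = real y * missing_meet_sum" .
  next
    fix B C assume "B \<in> ?L" "C \<in> ?L" "B \<noteq> C"
    then show "(\<Sum>z\<in>?Z. real (meet_size z B) * real (meet_size z C)) = missing_meet_product_sum"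
      by (rule sum_meet_size_mult_missing[OF xw])
  qed (use finite_blocks_through card_common_blocks_collinear[OF xw] l1_ge_2 in \<open>simp_all add: of_nat_diff\<close>)
  finally show ?thesis .
qed

lemma sum_card_meeting_missing:
  assumes xw: "collinear x w"
  shows "real (y * (\<Sum>z\<in>{z\<in>Bs. \<not> I x z \<and> \<not> I w z}.
      card (blocks_through x \<inter> blocks_through w \<inter> meeting_blocks z))) = real l1 * missing_meet_sum"
proof -
  have "y * (\<Sum>z\<in>{z\<in>Bs. \<not> I x z \<and> \<not> I w z}.
      card (blocks_through x \<inter> blocks_through w \<inter> meeting_blocks z))
    = (\<Sum>z\<in>{z\<in>Bs. \<not> I x z \<and> \<not> I w z}. \<Sum>B\<in>blocks_through x \<inter> blocks_through w. meet_size z B)"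
    unfolding sum_distrib_left using sum_meet_size_eq_card_meeting by simp
  then show ?thesis
    using sum_meet_sums_missing[OF xw] by simp
qed

lemma meeting_count_constant_iff:
  assumes xw: "collinear x w"
  shows "(\<exists>c. \<forall>z\<in>{z\<in>Bs. \<not> I x z \<and> \<not> I w z}.
      card (blocks_through x \<inter> blocks_through w \<inter> meeting_blocks z) = c) \<longleftrightarrow>
    (real b - 2 * real r + real l1)
      * (real l1 * real y * missing_meet_sum + real l1 * (real l1 - 1) * missing_meet_product_sum)
      = (real l1)^2 * missing_meet_sum^2"
    (is "_ \<longleftrightarrow> ?equation")
proof -
  let ?L = "blocks_through x \<inter> blocks_through w" and ?Z = "{z\<in>Bs. \<not> I x z \<and> \<not> I w z}"
  define g where "g z = (\<Sum>B\<in>?L. meet_size z B)" for z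
  have "(\<exists>c. \<forall>z\<in>?Z. card (?L \<inter> meeting_blocks z) = c)
      \<longleftrightarrow> (\<exists>c. \<forall>z\<in>?Z. y * card (?L \<inter> meeting_blocks z) = c)"
    using y_gt_1 by (intro constant_on_mult_iff[symmetric]) simp
  also have "\<dots> \<longleftrightarrow> (\<exists>c. \<forall>z\<in>?Z. g z = c)"
    using sum_meet_size_eq_card_meeting by (simp add: g_def)
  also have "\<dots> \<longleftrightarrow> real (card ?Z) * (\<Sum>z\<in>?Z. real (g z)^2) = (\<Sum>z\<in>?Z. real (g z))^2"
    by (rule constant_on_iff_card_mult_sum_squares) (simp add: finite_Bs)
  also have "\<dots> \<longleftrightarrow> ?equation"
    unfolding g_def real_card_blocks_missing[OF xw] sum_meet_sums_missing[OF xw]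
      sum_meet_sums_squared_missing[OF xw]
    by (simp add: algebra_simps power2_eq_square)
  finally show ?thesis .
qed

lemma meeting_counts_constant_iff:
  "(\<exists>c. \<forall>x w. collinear x w \<longrightarrow> (\<forall>z\<in>{z\<in>Bs. \<not> I x z \<and> \<not> I w z}.
      card (blocks_through x \<inter> blocks_through w \<inter> meeting_blocks z) = c)) \<longleftrightarrow>
    (real b - 2 * real r + real l1)
      * (real l1 * real y * missing_meet_sum + real l1 * (real l1 - 1) * missing_meet_product_sum)
      = (real l1)^2 * missing_meet_sum^2"
    (is "(\<exists>c. \<forall>x w. collinear x w \<longrightarrow> (\<forall>z\<in>?Z x w. ?f x w z = c)) \<longleftrightarrow> ?equation")
proof
  assume "\<exists>c. \<forall>x w. collinear x w \<longrightarrow> (\<forall>z\<in>?Z x w. ?f x w z = c)"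
  moreover obtain x w where "collinear x w"
    using ex_collinear by blast
  ultimately show ?equation
    using meeting_count_constant_iff by blast
next
  assume ?equation
  have "\<exists>c. \<forall>i\<in>{(x, w). collinear x w}. \<forall>z\<in>case_prod ?Z i. case_prod ?f i z = c"
  proof (rule constant_on_family)
    fix i assume "i \<in> {(x, w). collinear x w}"
    then show "\<exists>c. \<forall>z\<in>case_prod ?Z i. case_prod ?f i z = c"
      using meeting_count_constant_iff \<open>?equation\<close> by auto
  next
    fix i j assume "i \<in> {(x, w). collinear x w}" "j \<in> {(x, w). collinear x w}"
    then obtain x w x' w' where i: "i = (x, w)" "collinear x w" and j: "j = (x', w')" "collinear x' w'"
      by blast
    have "real (card (?Z x w)) = real (card (?Z x' w'))"
      using real_card_blocks_missing[OF i(2)] real_card_blocks_missing[OF j(2)] by simp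
    then show "card (case_prod ?Z i) = card (case_prod ?Z j)"
      using i j by simp
    have "real (y * sum (?f x w) (?Z x w)) = real (y * sum (?f x' w') (?Z x' w'))"
      using sum_card_meeting_missing[OF i(2)] sum_card_meeting_missing[OF j(2)] by simp
    then show "sum (case_prod ?f i) (case_prod ?Z i) = sum (case_prod ?f j) (case_prod ?Z j)"
      using i j y_gt_1 by (simp only: of_nat_eq_iff mult_cancel_left) simp
  qed (auto simp: finite_Bs)
  then show "\<exists>c. \<forall>x w. collinear x w \<longrightarrow> (\<forall>z\<in>?Z x w. ?f x w z = c)"
    by auto
qed

lemma two_P_homogeneous_iff_homogeneous_at:
  assumes t: "t \<ge> 1"
  shows "two_Y_homogeneous edges vertices (Inl ` P) \<longleftrightarrow>
    homogeneous_at edges (Inl ` P) 2 \<and> (t < k \<longrightarrow> homogeneous_at edges (Inl ` P) 3)"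
proof (cases "t < k")
  case True
  then have "\<forall>x\<in>Inl ` P. has_ecc edges vertices x 4"
    using has_ecc_4_if_t_less_k[OF t] by blast
  moreover have "{1..3::nat} = {1, 2, 3}"
    by auto
  ultimately have "two_Y_homogeneous edges vertices (Inl ` P)
      \<longleftrightarrow> (\<forall>i\<in>{1, 2, 3}. homogeneous_at edges (Inl ` P) i)"
    using two_Y_homogeneous_iff_homogeneous_at[of "Inl ` P" edges vertices 4] P_nonempty by simp
  then show ?thesis
    using True homogeneous_at_1[of edges "Inl ` P"] by simp
next
  case False
  then have "\<forall>x\<in>Inl ` P. has_ecc edges vertices x 3"
    using has_ecc_3_if_t_eq_k t_le_k by auto
  moreover have "{1..2::nat} = {1, 2}"
    by auto
  ultimately have "two_Y_homogeneous edges vertices (Inl ` P)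
      \<longleftrightarrow> (\<forall>i\<in>{1, 2}. homogeneous_at edges (Inl ` P) i)"
    using two_Y_homogeneous_iff_homogeneous_at[of "Inl ` P" edges vertices 3] P_nonempty by simp
  then show ?thesis
    using False homogeneous_at_1[of edges "Inl ` P"] by simp
qed

lemma not_two_P_homogeneous_if_t_eq_0:
  assumes "t = 0"
  shows "\<not> two_Y_homogeneous edges vertices (Inl ` P)"
  using not_has_ecc_if_t_eq_0[OF assms] P_nonempty unfolding two_Y_homogeneous_def by blast

end

theorem proposition4p10:
  fixes P :: "'a set" and Bs :: "'b set" and I :: "'a \<Rightarrow> 'b \<Rightarrow> bool"
    and v b r k l1 t y :: nat
  assumes "spbibd P Bs I v b r k l1 0 (k - 1) t"
    and "quasi_symmetric P Bs I 0 y"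
    and "y > 1"
  shows "two_Y_homogeneous (inc_edges P Bs I) (inc_vertices P Bs) (Inl ` P) \<longleftrightarrow>
    (real k = (real y - 1) * (real r - real l1) * (real t - 1) / (real l1 * (real t - real y)) + 2
     \<and> real t = (real k - 1) * (real r * (real y - 1) - real l1 * (real k - real y - 1))
                 / (real l1 * (real y - 1)))"
    (is "_ \<longleftrightarrow> ?formulas")
proof -
  interpret qs_spbibd P Bs I v b r k l1 t y
    using assms by unfold_locales
  show ?thesis
  proof (cases "t = 0")
    case True
    then show ?thesis
      using not_two_P_homogeneous_if_t_eq_0 formulas_fail_if_t_eq_0[OF _ _ _ r_y_l1_relation]
        y_gt_1 l1_ge_2 k_ge_2 by simp
  next
    case False
    then have t: "t \<ge> 1"
      by simp
    have "two_Y_homogeneous (inc_edges P Bs I) (inc_vertices P Bs) (Inl ` P) \<longleftrightarrow>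
        (real l1 * (real k - 2) + (real r - real l1) * (real t - 1)) * ((real l1 - 1) * (real y - 2) + real k - 2)
          = (real l1)^2 * (real k - 2)^2
        \<and> (t < k \<longrightarrow> (real b - 2 * real r + real l1)
          * (real l1 * real y * missing_meet_sum + real l1 * (real l1 - 1) * missing_meet_product_sum)
          = (real l1)^2 * missing_meet_sum^2)"
      unfolding two_P_homogeneous_iff_homogeneous_at[OF t] homogeneous_at_2_iff homogeneous_at_3_iff[OF t]
        triple_counts_constant_iff[OF t] meeting_counts_constant_iff ..
    also have "\<dots> \<longleftrightarrow> ?formulas"
      using formulas_iff_moment_equations[OF _ _ _ _ _ r_y_l1_relation b_relation]
        y_gt_1 l1_ge_2 y_less_k[OF t] t t_le_k
      by (simp add: missing_meet_sum_def missing_meet_product_sum_def)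
    finally show ?thesis .
  qed
qed

end
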